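(* Let $c$ be a nonzero real cubic form in $n$ variables, let $b\in\{1,\dotsc,n-1\}$ and let $\vec{x}^{(0)}\in\mathbb{R}^n$ with $\vec{\Delta}^{(c,b)}(\vec{x}^{(0)})\neq\vec{0}$. Then there exist a constant $A_n$ depending only on $n$ and an $(n-b)$-dimensional linear subspace $Y\subset\mathbb{R}^n$ such that for all $\vec{Y},\vec{Y}'\in Y$ and all $\vec{t}\in\mathbb{R}^n$, \[ \big|\vec{Y}^TH_c(\vec{t})\vec{Y}'\big|\leq A_n\left(\frac{\|J^{(c,b+1)}(\vec{x}^{(0)})\vec{t}\|}{\|\vec{\Delta}^{(c,b)}(\vec{x}^{(0)})\|}+\frac{|\lambda^{(c)}_{b+1}(\vec{x}^{(0)})|\,\|\vec{t}\|}{|\lambda^{(c)}_{b}(\vec{x}^{(0)})|}\right)\|\vec{Y}\|\,\|\vec{Y}'\|. \]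
   Context: $\|\cdot\|$ is the supremum norm. $\|c\|=\frac16\max_{i,j,k}|\partial^3c/\partial x_i\partial x_j\partial x_k|$ and $H_c(\vec{x})=\frac{1}{\|c\|}(\partial^2c(\vec{x})/\partial x_i\partial x_j)_{i,j}$ (Hessian of $c/\|c\|$). $\lambda_1^{(c)}(\vec{x}),\dotsc,\lambda_n^{(c)}(\vec{x})$ are the eigenvalues of $H_c(\vec{x})$, with multiplicity, in order of decreasing absolute value. $\vec{\Delta}^{(c,i)}(\vec{x})$ is the vector of all $i\times i$ minors of $H_c(\vec{x})$ (in some fixed order), and $J^{(c,i)}(\vec{x})=(\partial\Delta^{(c,i)}_j(\vec{x})/\partial x_k)_{j,k}$ its Jacobian matrix. (The hypothesis $\vec{\Delta}^{(c,b)}(\vec{x}^{(0)})\neq\vec{0}$ implies $\lambda_b^{(c)}(\vec{x}^{(0)})\neq 0$.) *)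

theory Defs
  imports Complex_Main "Jordan_Normal_Form.Char_Poly" "Jordan_Normal_Form.DL_Submatrix"
begin

definition is_cubic_form :: "nat \<Rightarrow> (real vec \<Rightarrow> real) \<Rightarrow> bool" where
  "is_cubic_form n c \<longleftrightarrow> (\<exists>C :: nat \<Rightarrow> nat \<Rightarrow> nat \<Rightarrow> real. \<forall>x \<in> carrier_vec n.
     c x = (\<Sum>i<n. \<Sum>j<n. \<Sum>k<n. C i j k * x $ i * x $ j * x $ k))"

text \<open>Partial derivative d f / d x_i at x (f a function on R^n); this is the library's deriv unfolded.\<close>
definition pderiv_at :: "nat \<Rightarrow> (real vec \<Rightarrow> real) \<Rightarrow> nat \<Rightarrow> real vec \<Rightarrow> real" where
  "pderiv_at n f i x = (SOME d. ((\<lambda>s. f (x + s \<cdot>\<^sub>v unit_vec n i)) has_real_derivative d) (at 0))"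

definition pd2 :: "nat \<Rightarrow> (real vec \<Rightarrow> real) \<Rightarrow> nat \<Rightarrow> nat \<Rightarrow> real vec \<Rightarrow> real" where
  "pd2 n f i j x = pderiv_at n (\<lambda>y. pderiv_at n f j y) i x"

definition pd3 :: "nat \<Rightarrow> (real vec \<Rightarrow> real) \<Rightarrow> nat \<Rightarrow> nat \<Rightarrow> nat \<Rightarrow> real vec \<Rightarrow> real" where
  "pd3 n f i j k x = pderiv_at n (\<lambda>y. pd2 n f j k y) i x"

text \<open>Norm of a cubic form: (1/6) max |d^3 c / dx_i dx_j dx_k| (the third partials of a
  cubic form are constant; we evaluate them at the origin).\<close>
definition cnorm :: "nat \<Rightarrow> (real vec \<Rightarrow> real) \<Rightarrow> real" where
  "cnorm n c = (1/6) * Max {\<bar>pd3 n c i j k (0\<^sub>v n)\<bar> | i j k. i < n \<and> j < n \<and> k < n}"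

definition hess :: "nat \<Rightarrow> (real vec \<Rightarrow> real) \<Rightarrow> real vec \<Rightarrow> real mat" where
  "hess n c x = mat n n (\<lambda>(i,j). pd2 n c i j x / cnorm n c)"

text \<open>Eigenvalues of H_c(x) with multiplicity, in order of decreasing absolute value
  (as roots of the characteristic polynomial; H_c(x) is real symmetric, so such a list exists).
  eig n c x k is lambda_k (1-based).\<close>
definition eig_list :: "nat \<Rightarrow> (real vec \<Rightarrow> real) \<Rightarrow> real vec \<Rightarrow> real list" where
  "eig_list n c x = (SOME ls. length ls = n \<and>
      char_poly (hess n c x) = (\<Prod>a\<leftarrow>ls. [:- a, 1:]) \<and>
      sorted_wrt (\<lambda>a b. \<bar>b\<bar> \<le> \<bar>a\<bar>) ls)"

definition eig :: "nat \<Rightarrow> (real vec \<Rightarrow> real) \<Rightarrow> real vec \<Rightarrow> nat \<Rightarrow> real" where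
  "eig n c x k = eig_list n c x ! (k - 1)"

definition minor_idx :: "nat \<Rightarrow> nat \<Rightarrow> (nat set \<times> nat set) set" where
  "minor_idx n i = {(I,J). I \<subseteq> {..<n} \<and> J \<subseteq> {..<n} \<and> card I = i \<and> card J = i}"

definition Delta :: "nat \<Rightarrow> (real vec \<Rightarrow> real) \<Rightarrow> nat set \<Rightarrow> nat set \<Rightarrow> real vec \<Rightarrow> real" where
  "Delta n c I J x = det (submatrix (hess n c x) I J)"

definition Delta_norm :: "nat \<Rightarrow> (real vec \<Rightarrow> real) \<Rightarrow> nat \<Rightarrow> real vec \<Rightarrow> real" where
  "Delta_norm n c i x = Max {\<bar>Delta n c I J x\<bar> | I J. (I,J) \<in> minor_idx n i}"

definition Jac_norm :: "nat \<Rightarrow> (real vec \<Rightarrow> real) \<Rightarrow> nat \<Rightarrow> real vec \<Rightarrow> real vec \<Rightarrow> real" where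
  "Jac_norm n c i x t = Max {\<bar>\<Sum>k<n. pderiv_at n (Delta n c I J) k x * t $ k\<bar> | I J. (I,J) \<in> minor_idx n i}"

definition supnorm :: "real vec \<Rightarrow> real" where
  "supnorm v = Max {\<bar>v $ i\<bar> | i. i < dim_vec v}"

end

theory Submission
  imports Defs "Jordan_Normal_Form.Schur_Decomposition"
begin

text \<open>Let H = H_c(x0) have orthonormal eigenvectors q_1, ..., q_n with eigenvalues
  \<lambda>_1, ..., \<lambda>_n of decreasing modulus, and let Y be spanned by q_(b+1), ..., q_n. For Y, Y' in this
  span consider the (b+1) x (b+1) determinant of U^T H_c(x0 + s t) V with U = (q_1 ... q_b Y) and
  V = (q_1 ... q_b Y'). At s = 0 this matrix is diagonal, with entries \<lambda>_1, ..., \<lambda>_b and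
  Y^T H Y' = O(|\<lambda>_(b+1)| |Y| |Y'|); as H_c is linear, the derivative at s = 0 is therefore
  \<lambda>_1 ... \<lambda>_b Y^T H_c(t) Y' up to a term of size |\<lambda>_(b+1)| |\<lambda>_1 ... \<lambda>_b| |t| / |\<lambda>_b|.
  By Cauchy--Binet the same derivative is a combination of the derivatives of the (b+1) x (b+1) minors
  of H_c along t, that is of the entries of J^(c,b+1)(x0) t, and likewise every b x b minor of H is
  at most a constant times |\<lambda>_1 ... \<lambda>_b|. Dividing by |\<lambda>_1 ... \<lambda>_b| gives the estimate.\<close>

section \<open>Derivatives of determinants\<close>

definition det_derivative :: "nat \<Rightarrow> (nat \<Rightarrow> nat \<Rightarrow> real) \<Rightarrow> (nat \<Rightarrow> nat \<Rightarrow> real) \<Rightarrow> real" where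
  "det_derivative k A B = (\<Sum>p\<in>{p. p permutes {0..<k}}. signof p *
      (\<Sum>i\<in>{0..<k}. B i (p i) * (\<Prod>j\<in>{0..<k}-{i}. A j (p j))))"

lemma DERIV_prod_affine:
  fixes a b :: "nat \<Rightarrow> real"
  shows "((\<lambda>s. \<Prod>i\<in>I. a i + s * b i) has_real_derivative (\<Sum>i\<in>I. b i * (\<Prod>j\<in>I-{i}. a j))) (at 0)"
proof -
  have "((\<lambda>s. \<Prod>i\<in>I. a i + s * b i) has_derivative
     (\<lambda>y. \<Sum>i\<in>I. (y * b i) * (\<Prod>j\<in>I-{i}. a j + 0 * b j))) (at 0)"
    by (rule has_derivative_prod) (auto intro!: derivative_eq_intros)
  moreover have "(\<lambda>y. \<Sum>i\<in>I. (y * b i) * (\<Prod>j\<in>I-{i}. a j + 0 * b j)) =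
      (*) (\<Sum>i\<in>I. b i * (\<Prod>j\<in>I-{i}. a j))"
    by (rule ext, subst sum_distrib_right, rule sum.cong) auto
  ultimately show ?thesis unfolding has_field_derivative_def by simp
qed

lemma permutes_lessThan_bound: "p permutes {0..<k} \<Longrightarrow> i < k \<Longrightarrow> p i < (k::nat)"
  using permutes_in_image[of p "{0..<k}" i] by (simp add: atLeast0LessThan)

lemma has_real_derivative_det_affine:
  "((\<lambda>s. det (mat k k (\<lambda>(i,j). A i j + s * B i j))) has_real_derivative det_derivative k A B) (at 0)"
proof -
  have "det (mat k k (\<lambda>(i,j). A i j + s * B i j)) =
     (\<Sum>p\<in>{p. p permutes {0..<k}}. signof p * (\<Prod>i\<in>{0..<k}. A i (p i) + s * B i (p i)))" for s
    by (subst det_def') (auto intro!: sum.cong prod.cong simp: permutes_lessThan_bound)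
  then show ?thesis
    unfolding det_derivative_def by (simp only:) (intro DERIV_sum DERIV_cmult DERIV_prod_affine)
qed

lemma det_derivative_eqI:
  "((\<lambda>s. det (mat k k (\<lambda>(i,j). A i j + s * B i j))) has_real_derivative D) (at 0) \<Longrightarrow>
   det_derivative k A B = D"
  using DERIV_unique has_real_derivative_det_affine by blast

lemma det_derivative_sum_right:
  "finite L \<Longrightarrow> det_derivative k A (\<lambda>i j. \<Sum>l\<in>L. w l * B l i j) = (\<Sum>l\<in>L. w l * det_derivative k A (B l))"
  unfolding det_derivative_def
  by (simp add: sum_distrib_left sum_distrib_right sum.swap[of _ L] mult_ac)

lemma det_derivative_cong:
  assumes "\<And>i j. i < k \<Longrightarrow> j < k \<Longrightarrow> A i j = A' i j" "\<And>i j. i < k \<Longrightarrow> j < k \<Longrightarrow> B i j = B' i j"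
  shows "det_derivative k A B = det_derivative k A' B'"
  unfolding det_derivative_def using assms
  by (auto intro!: sum.cong prod.cong simp: permutes_lessThan_bound)

lemma permutes_fixing_all_but_one:
  assumes p: "p permutes S" and fixed: "\<And>j. j \<in> S \<Longrightarrow> j \<noteq> i \<Longrightarrow> p j = j"
  shows "p = id"
proof -
  have "p i = i"
  proof (rule ccontr)
    assume ne: "p i \<noteq> i"
    then have "p i \<in> S" using p by (meson permutes_in_image permutes_not_in)
    then have "p (p i) = p i" using fixed ne by auto
    then show False using ne permutes_inj[OF p] by (auto dest: injD)
  qed
  then show ?thesis using fixed p by (metis eq_id_iff permutes_not_in)
qed

lemma det_derivative_diagonal:
  "det_derivative k (\<lambda>i j. if i = j then d i else 0) B = (\<Sum>i\<in>{0..<k}. B i i * (\<Prod>j\<in>{0..<k}-{i}. d j))"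
proof -
  have "signof p * (\<Sum>i\<in>{0..<k}. B i (p i) * (\<Prod>j\<in>{0..<k}-{i}. if j = p j then d j else 0)) = 0"
    if p: "p permutes {0..<k}" and "p \<noteq> id" for p
  proof -
    have "(\<Prod>j\<in>{0..<k}-{i}. if j = p j then d j else 0) = 0" for i
    proof -
      obtain j where "j \<in> {0..<k}-{i}" "p j \<noteq> j"
        using permutes_fixing_all_but_one[OF p, of i] \<open>p \<noteq> id\<close> by auto
      then show ?thesis by (intro prod_zero) (auto intro!: bexI[of _ j])
    qed
    then show ?thesis by simp
  qed
  then have "det_derivative k (\<lambda>i j. if i = j then d i else 0) B =
    (\<Sum>p\<in>{p. p permutes {0..<k}}. if p = id then (\<Sum>i\<in>{0..<k}. B i i * (\<Prod>j\<in>{0..<k}-{i}. d j)) else 0)"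
    unfolding det_derivative_def by (intro sum.cong) (auto simp: sign_id)
  also have "\<dots> = (\<Sum>i\<in>{0..<k}. B i i * (\<Prod>j\<in>{0..<k}-{i}. d j))"
    by (subst sum.delta) (auto simp: permutes_id finite_permutations)
  finally show ?thesis .
qed

section \<open>Cauchy--Binet expansions\<close>

text \<open>Maps from {0..<k} to {0..<n}, extended by the identity so that there are finitely many;
  they index Cauchy--Binet expansions.\<close>

definition index_maps :: "nat \<Rightarrow> nat \<Rightarrow> (nat \<Rightarrow> nat) set" where
  "index_maps k n = {f. (\<forall>i\<in>{0..<k}. f i \<in> {0..<n}) \<and> (\<forall>i. i \<notin> {0..<k} \<longrightarrow> f i = i)}"

lemma index_maps_less: "f \<in> index_maps k n \<Longrightarrow> i < k \<Longrightarrow> f i < n"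
  unfolding index_maps_def by auto

lemma det_mat_sum_rows:
  fixes u W :: "nat \<Rightarrow> nat \<Rightarrow> real"
  shows "det (mat k k (\<lambda>(i,j). \<Sum>a<n. u a i * W a j)) =
    (\<Sum>f\<in>index_maps k n. (\<Prod>i<k. u (f i) i) * det (mat k k (\<lambda>(i,j). W (f i) j)))"
proof -
  let ?a = "\<lambda>i l. u l i \<cdot>\<^sub>v vec k (W l)"
  have a: "?a \<in> {0..<k} \<rightarrow> {0..<n} \<rightarrow> carrier_vec k" by auto
  have "mat k k (\<lambda>(i,j). \<Sum>a<n. u a i * W a j) = mat\<^sub>r k k (\<lambda>i. finsum_vec TYPE(real) k (?a i) {0..<n})"
    by (rule eq_matI, auto simp: index_finsum_vec lessThan_atLeast0)
  then have "det (mat k k (\<lambda>(i,j). \<Sum>a<n. u a i * W a j)) =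
     (\<Sum>f\<in>index_maps k n. det (mat\<^sub>r k k (\<lambda>i. ?a i (f i))))"
    unfolding index_maps_def by (simp only:) (rule det_linear_rows_sum[OF _ a], simp)
  also have "\<dots> = (\<Sum>f\<in>index_maps k n. (\<Prod>i<k. u (f i) i) * det (mat k k (\<lambda>(i,j). W (f i) j)))"
  proof (rule sum.cong[OF refl])
    fix f
    have "det (mat\<^sub>r k k (\<lambda>i. ?a i (f i))) = prod (\<lambda>i. u (f i) i) {0..<k} * det (mat\<^sub>r k k (\<lambda>i. vec k (W (f i))))"
      by (rule det_rows_mul) auto
    moreover have "mat\<^sub>r k k (\<lambda>i. vec k (W (f i))) = mat k k (\<lambda>(i,j). W (f i) j)"
      by (rule eq_matI) auto
    ultimately show "det (mat\<^sub>r k k (\<lambda>i. ?a i (f i))) = (\<Prod>i<k. u (f i) i) * det (mat k k (\<lambda>(i,j). W (f i) j))"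
      by (simp add: lessThan_atLeast0)
  qed
  finally show ?thesis .
qed

lemma det_mat_swap_indices: "det (mat k k (\<lambda>(i,j). X j i)) = det (mat k k (\<lambda>(i,j). (X i j :: real)))"
proof -
  have "mat k k (\<lambda>(i,j). X j i) = transpose_mat (mat k k (\<lambda>(i,j). X i j))"
    by (rule eq_matI) auto
  then show ?thesis by (simp add: det_transpose[of _ k])
qed

lemma det_mat_sum_cols:
  fixes X v :: "nat \<Rightarrow> nat \<Rightarrow> real"
  shows "det (mat k k (\<lambda>(i,j). \<Sum>c<n. X i c * v c j)) =
    (\<Sum>g\<in>index_maps k n. (\<Prod>j<k. v (g j) j) * det (mat k k (\<lambda>(i,j). X i (g j))))"
proof -
  have "det (mat k k (\<lambda>(i,j). \<Sum>c<n. X i c * v c j)) = det (mat k k (\<lambda>(i,j). \<Sum>c<n. v c i * X j c))"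
    by (subst det_mat_swap_indices[symmetric]) (simp add: mult.commute)
  also have "\<dots> = (\<Sum>g\<in>index_maps k n. (\<Prod>j<k. v (g j) j) * det (mat k k (\<lambda>(i,j). X j (g i))))"
    by (rule det_mat_sum_rows)
  also have "\<dots> = (\<Sum>g\<in>index_maps k n. (\<Prod>j<k. v (g j) j) * det (mat k k (\<lambda>(i,j). X i (g j))))"
    by (subst det_mat_swap_indices[symmetric]) simp
  finally show ?thesis .
qed

lemma det_mat_bilinear_sum:
  fixes u v M :: "nat \<Rightarrow> nat \<Rightarrow> real"
  shows "det (mat k k (\<lambda>(i,j). \<Sum>a<n. \<Sum>c<n. u a i * M a c * v c j)) =
    (\<Sum>f\<in>index_maps k n. \<Sum>g\<in>index_maps k n. (\<Prod>i<k. u (f i) i) * (\<Prod>j<k. v (g j) j) *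
        det (mat k k (\<lambda>(i,j). M (f i) (g j))))"
proof -
  have "det (mat k k (\<lambda>(i,j). \<Sum>a<n. \<Sum>c<n. u a i * M a c * v c j)) =
        det (mat k k (\<lambda>(i,j). \<Sum>a<n. u a i * (\<Sum>c<n. M a c * v c j)))"
    by (simp add: sum_distrib_left mult.assoc)
  also have "\<dots> = (\<Sum>f\<in>index_maps k n. (\<Prod>i<k. u (f i) i) * det (mat k k (\<lambda>(i,j). \<Sum>c<n. M (f i) c * v c j)))"
    by (rule det_mat_sum_rows)
  also have "\<dots> = (\<Sum>f\<in>index_maps k n. (\<Prod>i<k. u (f i) i) *
      (\<Sum>g\<in>index_maps k n. (\<Prod>j<k. v (g j) j) * det (mat k k (\<lambda>(i,j). M (f i) (g j)))))"
    by (simp only: det_mat_sum_cols)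
  also have "\<dots> = (\<Sum>f\<in>index_maps k n. \<Sum>g\<in>index_maps k n. (\<Prod>i<k. u (f i) i) * (\<Prod>j<k. v (g j) j) *
        det (mat k k (\<lambda>(i,j). M (f i) (g j))))"
    by (simp add: sum_distrib_left mult.assoc)
  finally show ?thesis .
qed

lemma det_derivative_bilinear_sum:
  fixes u v A B :: "nat \<Rightarrow> nat \<Rightarrow> real"
  shows "det_derivative k (\<lambda>i j. \<Sum>a<n. \<Sum>c<n. u a i * A a c * v c j) (\<lambda>i j. \<Sum>a<n. \<Sum>c<n. u a i * B a c * v c j) =
    (\<Sum>f\<in>index_maps k n. \<Sum>g\<in>index_maps k n. (\<Prod>i<k. u (f i) i) * (\<Prod>j<k. v (g j) j) *
        det_derivative k (\<lambda>i j. A (f i) (g j)) (\<lambda>i j. B (f i) (g j)))"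
proof (rule det_derivative_eqI)
  have "(\<Sum>a<n. \<Sum>c<n. u a i * A a c * v c j) + s * (\<Sum>a<n. \<Sum>c<n. u a i * B a c * v c j) =
        (\<Sum>a<n. \<Sum>c<n. u a i * (A a c + s * B a c) * v c j)" for s i j
    by (simp add: sum_distrib_left sum.distrib algebra_simps)
  then show "((\<lambda>s. det (mat k k (\<lambda>(i,j). (\<Sum>a<n. \<Sum>c<n. u a i * A a c * v c j) +
      s * (\<Sum>a<n. \<Sum>c<n. u a i * B a c * v c j)))) has_real_derivative
    (\<Sum>f\<in>index_maps k n. \<Sum>g\<in>index_maps k n. (\<Prod>i<k. u (f i) i) * (\<Prod>j<k. v (g j) j) *
        det_derivative k (\<lambda>i j. A (f i) (g j)) (\<lambda>i j. B (f i) (g j)))) (at 0)"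
    by (simp only: det_mat_bilinear_sum) (intro DERIV_sum DERIV_cmult has_real_derivative_det_affine)
qed

lemma pick_ge_index: "i < card S \<Longrightarrow> i \<le> pick S i"
proof (induction i)
  case (Suc i)
  then have "pick S i < pick S (Suc i)" by (intro pick_mono) auto
  then show ?case using Suc by simp
qed simp

lemma inj_on_pick: "inj_on (pick S) {..<card S}"
  by (rule inj_onI) (metis lessThan_iff nat_neq_iff pick_mono)

lemma pick_image_lessThan_card:
  assumes "finite S"
  shows "pick S ` {..<card S} = S"
proof -
  have "pick S ` {..<card S} \<subseteq> S" using pick_in_set by auto
  moreover have "card (pick S ` {..<card S}) = card S" using card_image[OF inj_on_pick] by simp
  ultimately show ?thesis using assms by (simp add: card_subset_eq)
qed

lemma exists_permutes_pick:
  assumes inj: "inj_on f {..<k}"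
  shows "\<exists>\<sigma>. \<sigma> permutes {0..<k} \<and> (\<forall>i<k. f i = pick (f ` {..<k}) (\<sigma> i))"
proof -
  define I where "I = f ` {..<k}"
  define \<sigma> where "\<sigma> = (\<lambda>i. if i < k then card {a\<in>I. a < f i} else i)"
  have cI: "card I = k" unfolding I_def using card_image[OF inj] by simp
  have pk: "\<And>i. i < k \<Longrightarrow> pick I (\<sigma> i) = f i"
    unfolding \<sigma>_def by (simp add: I_def pick_card_in_set)
  have "\<sigma> i < k" if i: "i < k" for i
  proof -
    have "{a\<in>I. a < f i} \<subset> I" using i unfolding I_def by auto
    then show ?thesis using i cI psubset_card_mono[of I] unfolding \<sigma>_def I_def by simp
  qed
  moreover have injs: "inj_on \<sigma> {0..<k}"
    by (rule inj_onI) (metis pk inj atLeastLessThan_iff lessThan_iff inj_onD)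
  ultimately have "\<sigma> ` {0..<k} = {0..<k}"
    by (intro endo_inj_surj) auto
  with injs have "bij_betw \<sigma> {0..<k} {0..<k}" by (simp add: bij_betw_def)
  moreover have "\<And>x. x \<notin> {0..<k} \<Longrightarrow> \<sigma> x = x" unfolding \<sigma>_def by auto
  ultimately have "\<sigma> permutes {0..<k}" by (rule bij_imp_permutes)
  then show ?thesis using pk unfolding I_def by auto
qed

lemma det_mat_rows_pick:
  assumes inj: "inj_on f {..<k}"
  shows "\<exists>\<sigma>. \<sigma> permutes {0..<k} \<and> (\<forall>Z. det (mat k k (\<lambda>(i,j). Z (f i) j)) =
      of_int (sign \<sigma>) * det (mat k k (\<lambda>(i,j). (Z (pick (f ` {..<k}) i) j :: real))))"
proof -
  obtain \<sigma> where s: "\<sigma> permutes {0..<k}" and pk: "\<forall>i<k. f i = pick (f ` {..<k}) (\<sigma> i)"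
    using exists_permutes_pick[OF inj] by blast
  have "det (mat k k (\<lambda>(i,j). Z (f i) j)) =
      of_int (sign \<sigma>) * det (mat k k (\<lambda>(i,j). Z (pick (f ` {..<k}) i) j))" for Z :: "nat \<Rightarrow> nat \<Rightarrow> real"
  proof -
    let ?A = "mat k k (\<lambda>(i,j). Z (pick (f ` {..<k}) i) j)"
    have "mat k k (\<lambda>(i,j). Z (f i) j) = mat k k (\<lambda>(i,j). ?A $$ (\<sigma> i, j))"
      by (rule eq_matI) (auto simp: permutes_lessThan_bound[OF s] pk)
    then show ?thesis using det_permute_rows[of ?A k \<sigma>] s by simp
  qed
  then show ?thesis using s by blast
qed

lemma det_mat_cols_pick:
  assumes inj: "inj_on g {..<k}"
  shows "\<exists>\<sigma>. \<sigma> permutes {0..<k} \<and> (\<forall>Z. det (mat k k (\<lambda>(i,j). Z i (g j))) =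
      of_int (sign \<sigma>) * det (mat k k (\<lambda>(i,j). (Z i (pick (g ` {..<k}) j) :: real))))"
proof -
  obtain \<sigma> where s: "\<sigma> permutes {0..<k}" and h: "\<forall>Z. det (mat k k (\<lambda>(i,j). Z (g i) j)) =
      of_int (sign \<sigma>) * det (mat k k (\<lambda>(i,j). (Z (pick (g ` {..<k}) i) j :: real)))"
    using det_mat_rows_pick[OF inj] by blast
  have "det (mat k k (\<lambda>(i,j). Z i (g j))) =
      of_int (sign \<sigma>) * det (mat k k (\<lambda>(i,j). Z i (pick (g ` {..<k}) j)))" for Z :: "nat \<Rightarrow> nat \<Rightarrow> real"
  proof -
    have "det (mat k k (\<lambda>(i,j). Z i (g j))) = det (mat k k (\<lambda>(i,j). Z j (g i)))"
      by (rule det_mat_swap_indices[symmetric])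
    also have "\<dots> = of_int (sign \<sigma>) * det (mat k k (\<lambda>(i,j). Z j (pick (g ` {..<k}) i)))"
      using h[rule_format, of "\<lambda>a b. Z b a"] by simp
    also have "det (mat k k (\<lambda>(i,j). Z j (pick (g ` {..<k}) i))) =
        det (mat k k (\<lambda>(i,j). Z i (pick (g ` {..<k}) j)))"
      by (rule det_mat_swap_indices)
    finally show ?thesis .
  qed
  then show ?thesis using s by blast
qed

lemma det_mat_index_maps_minor:
  assumes f: "f \<in> index_maps k n" and g: "g \<in> index_maps k n" and kn: "k \<le> n"
  obtains e I J where "(I,J) \<in> minor_idx n k" "\<bar>e\<bar> \<le> 1"
    "\<And>M. det (mat k k (\<lambda>(i,j). M (f i) (g j))) = e * det (mat k k (\<lambda>(i,j). (M (pick I i) (pick J j) :: real)))"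
proof -
  have trivial: "({..<k},{..<k}) \<in> minor_idx n k" using kn unfolding minor_idx_def by auto
  consider "\<not> inj_on f {..<k}" | "\<not> inj_on g {..<k}" | "inj_on f {..<k}" "inj_on g {..<k}" by blast
  then show ?thesis
  proof cases
    case 1
    then obtain i i' where "i < k" "i' < k" "i \<noteq> i'" "f i = f i'" unfolding inj_on_def by auto
    then have "det (mat k k (\<lambda>(i,j). M (f i) (g j))) = 0" for M :: "nat \<Rightarrow> nat \<Rightarrow> real"
      by (intro det_identical_rows[of _ k i i']) (auto intro!: eq_vecI)
    then show ?thesis using that[OF trivial, of 0] by simp
  next
    case 2
    then obtain j j' where "j < k" "j' < k" "j \<noteq> j'" "g j = g j'" unfolding inj_on_def by auto
    then have "det (mat k k (\<lambda>(i,j). M (f i) (g j))) = 0" for M :: "nat \<Rightarrow> nat \<Rightarrow> real"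
      by (intro det_identical_columns[of _ k j j']) (auto intro!: eq_vecI)
    then show ?thesis using that[OF trivial, of 0] by simp
  next
    case 3
    obtain \<sigma> where "\<sigma> permutes {0..<k}" and hs: "\<forall>Z. det (mat k k (\<lambda>(i,j). Z (f i) j)) =
        of_int (sign \<sigma>) * det (mat k k (\<lambda>(i,j). (Z (pick (f ` {..<k}) i) j :: real)))"
      using det_mat_rows_pick[OF 3(1)] by blast
    obtain \<tau> where "\<tau> permutes {0..<k}" and ht: "\<forall>Z. det (mat k k (\<lambda>(i,j). Z i (g j))) =
        of_int (sign \<tau>) * det (mat k k (\<lambda>(i,j). (Z i (pick (g ` {..<k}) j) :: real)))"
      using det_mat_cols_pick[OF 3(2)] by blast
    show ?thesis
    proof (rule that)
      show "(f ` {..<k}, g ` {..<k}) \<in> minor_idx n k"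
        using f g 3 unfolding minor_idx_def index_maps_def by (auto simp: card_image)
      show "\<bar>of_int (sign \<sigma>) * of_int (sign \<tau>) :: real\<bar> \<le> 1"
        by (simp add: abs_mult sign_def)
      show "det (mat k k (\<lambda>(i,j). M (f i) (g j))) = (of_int (sign \<sigma>) * of_int (sign \<tau>)) *
          det (mat k k (\<lambda>(i,j). M (pick (f ` {..<k}) i) (pick (g ` {..<k}) j)))" for M :: "nat \<Rightarrow> nat \<Rightarrow> real"
        using hs[rule_format, of "\<lambda>a j. M a (g j)"] ht[rule_format, of "\<lambda>i b. M (pick (f ` {..<k}) i) b"]
        by simp
    qed
  qed
qed

lemma det_derivative_index_maps_minor:
  assumes "f \<in> index_maps k n" "g \<in> index_maps k n" "k \<le> n"
  obtains e I J where "(I,J) \<in> minor_idx n k" "\<bar>e\<bar> \<le> 1"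
    "det_derivative k (\<lambda>i j. A (f i) (g j)) (\<lambda>i j. B (f i) (g j)) =
     e * det_derivative k (\<lambda>i j. A (pick I i) (pick J j)) (\<lambda>i j. B (pick I i) (pick J j))"
proof (rule det_mat_index_maps_minor[OF assms])
  fix I J e
  assume IJ: "(I,J) \<in> minor_idx n k" "\<bar>e\<bar> \<le> 1" and det: "\<And>M. det (mat k k (\<lambda>(i,j). M (f i) (g j))) =
    e * det (mat k k (\<lambda>(i,j). (M (pick I i) (pick J j) :: real)))"
  have "det_derivative k (\<lambda>i j. A (f i) (g j)) (\<lambda>i j. B (f i) (g j)) =
     e * det_derivative k (\<lambda>i j. A (pick I i) (pick J j)) (\<lambda>i j. B (pick I i) (pick J j))"
    by (rule det_derivative_eqI)
      (simp only: det[of "\<lambda>a c. A a c + s * B a c" for s], intro DERIV_cmult has_real_derivative_det_affine)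
  with IJ show thesis by (rule that)
qed

lemma abs_det_le_fact_mult:
  fixes A :: "real mat"
  assumes "A \<in> carrier_mat k k"
    and bound: "\<And>p. p permutes {0..<k} \<Longrightarrow> (\<Prod>i=0..<k. \<bar>A $$ (i, p i)\<bar>) \<le> B"
  shows "\<bar>det A\<bar> \<le> fact k * B"
proof -
  have "\<bar>det A\<bar> \<le> (\<Sum>p\<in>{p. p permutes {0..<k}}. \<bar>signof p * (\<Prod>i=0..<k. A $$ (i, p i))\<bar>)"
    unfolding det_def'[OF assms(1)] by (rule sum_abs)
  also have "\<dots> \<le> (\<Sum>p\<in>{p. p permutes {0..<k}}. B)"
    using bound by (intro sum_mono) (simp add: abs_mult abs_prod sign_def)
  also have "\<dots> = fact k * B"
    using card_permutations[of "{0..<k}" k] by simp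
  finally show ?thesis .
qed

lemma prod_abs_sorted_le_initial:
  fixes ls :: "real list"
  assumes sorted: "sorted_wrt (\<lambda>a b. \<bar>b\<bar> \<le> \<bar>a\<bar>) ls" and inj: "inj_on f {..<k}"
    and range: "\<And>i. i < k \<Longrightarrow> f i < length ls"
  shows "(\<Prod>i<k. \<bar>ls ! f i\<bar>) \<le> (\<Prod>i<k. \<bar>ls ! i\<bar>)"
proof -
  define S where "S = f ` {..<k}"
  have fS: "finite S" and cS: "card S = k" unfolding S_def using card_image[OF inj] by auto
  have "(\<Prod>i<k. \<bar>ls ! f i\<bar>) = (\<Prod>i<k. \<bar>ls ! pick S i\<bar>)"
    using prod.reindex[OF inj, of "\<lambda>x. \<bar>ls ! x\<bar>"] prod.reindex[OF inj_on_pick, of "\<lambda>x. \<bar>ls ! x\<bar>" S]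
      pick_image_lessThan_card[OF fS] cS unfolding S_def by simp
  also have "\<dots> \<le> (\<Prod>i<k. \<bar>ls ! i\<bar>)"
  proof (rule prod_mono)
    fix i assume i: "i \<in> {..<k}"
    have "i \<le> pick S i" using pick_ge_index[of i S] i cS by simp
    moreover have "pick S i < length ls" using pick_in_set[of i S] i cS range unfolding S_def by auto
    ultimately have "\<bar>ls ! pick S i\<bar> \<le> \<bar>ls ! i\<bar>"
      using sorted_wrt_nth_less[OF sorted, of i "pick S i"] by (cases "i = pick S i") auto
    then show "0 \<le> \<bar>ls ! pick S i\<bar> \<and> \<bar>ls ! pick S i\<bar> \<le> \<bar>ls ! i\<bar>" by simp
  qed
  finally show ?thesis .
qed

lemma abs_det_diagonal_index_maps_le:
  fixes ls :: "real list"
  assumes sorted: "sorted_wrt (\<lambda>a b. \<bar>b\<bar> \<le> \<bar>a\<bar>) ls" and f: "f \<in> index_maps k (length ls)"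
  shows "\<bar>det (mat k k (\<lambda>(i,j). if f i = g j then ls ! f i else 0))\<bar> \<le> fact k * (\<Prod>i<k. \<bar>ls ! i\<bar>)"
proof (cases "inj_on f {..<k}")
  case False
  then obtain i i' where "i < k" "i' < k" "i \<noteq> i'" "f i = f i'" unfolding inj_on_def by auto
  then have "det (mat k k (\<lambda>(i,j). if f i = g j then ls ! f i else 0)) = 0"
    by (intro det_identical_rows[of _ k i i']) (auto intro!: eq_vecI)
  then show ?thesis by (auto intro!: mult_nonneg_nonneg prod_nonneg)
next
  case True
  show ?thesis
  proof (rule abs_det_le_fact_mult)
    fix p assume p: "p permutes {0..<k}"
    have "(\<Prod>i=0..<k. \<bar>mat k k (\<lambda>(i,j). if f i = g j then ls ! f i else 0) $$ (i, p i)\<bar>) \<le>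
       (\<Prod>i=0..<k. \<bar>ls ! f i\<bar>)"
      by (rule prod_mono) (auto simp: permutes_lessThan_bound[OF p])
    also have "\<dots> \<le> (\<Prod>i<k. \<bar>ls ! i\<bar>)"
      using prod_abs_sorted_le_initial[OF sorted True index_maps_less[OF f]] by (simp add: lessThan_atLeast0)
    finally show "(\<Prod>i=0..<k. \<bar>mat k k (\<lambda>(i,j). if f i = g j then ls ! f i else 0) $$ (i, p i)\<bar>) \<le>
      (\<Prod>i<k. \<bar>ls ! i\<bar>)" .
  qed simp
qed

section \<open>The spectral theorem for real symmetric matrices\<close>

lemma real_eigenvalue_of_symmetric:
  fixes A :: "nat \<Rightarrow> nat \<Rightarrow> real" and v :: "nat \<Rightarrow> complex"
  assumes sym: "\<And>i j. i < n \<Longrightarrow> j < n \<Longrightarrow> A i j = A j i"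
    and eigen: "\<And>i. i < n \<Longrightarrow> (\<Sum>j<n. of_real (A i j) * v j) = a * v i"
    and nonzero: "i0 < n" "v i0 \<noteq> 0"
  shows "Im a = 0"
proof -
  define s where "s = (\<Sum>i<n. \<Sum>j<n. cnj (v i) * of_real (A i j) * v j)"
  define r where "r = (\<Sum>i<n. (cmod (v i))^2)"
  have "s = (\<Sum>i<n. cnj (v i) * (\<Sum>j<n. of_real (A i j) * v j))"
    unfolding s_def by (simp add: sum_distrib_left mult.assoc)
  also have "\<dots> = (\<Sum>i<n. a * (cnj (v i) * v i))"
    by (rule sum.cong) (auto simp: eigen)
  also have "\<dots> = a * of_real r"
  proof -
    have "cnj z * z = complex_of_real ((cmod z)^2)" for z
      by (metis complex_norm_square mult.commute of_real_power)
    then show ?thesis unfolding r_def by (simp add: sum_distrib_left)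
  qed
  finally have s_eq: "s = a * of_real r" .
  have "cnj s = (\<Sum>i<n. \<Sum>j<n. v i * of_real (A i j) * cnj (v j))"
    unfolding s_def by (simp add: cnj_sum)
  also have "\<dots> = (\<Sum>j<n. \<Sum>i<n. v i * of_real (A i j) * cnj (v j))"
    by (rule sum.swap)
  also have "\<dots> = s"
    unfolding s_def by (intro sum.cong refl) (auto simp: sym mult_ac)
  finally have "cnj s = s" .
  moreover have "r > 0"
  proof -
    have "(cmod (v i0))^2 \<le> r" unfolding r_def
      by (rule member_le_sum) (use nonzero in auto)
    then show ?thesis using nonzero by (smt (verit) zero_less_norm_iff zero_less_power)
  qed
  ultimately have "cnj a * of_real r = a * of_real r"
    using s_eq by (metis complex_cnj_complex_of_real complex_cnj_mult)
  then have "cnj a = a" using \<open>r > 0\<close> by simp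
  then show ?thesis by (metis Reals_cnj_iff complex_is_Real_iff)
qed

interpretation of_real_poly: map_poly_inj_comm_ring_hom "complex_of_real"
  by unfold_locales auto

lemma char_poly_symmetric_real_factors:
  fixes A :: "real mat"
  assumes A: "A \<in> carrier_mat n n" and sym: "\<And>i j. i < n \<Longrightarrow> j < n \<Longrightarrow> A $$ (i,j) = A $$ (j,i)"
  obtains es where "char_poly A = (\<Prod>a\<leftarrow>es. [:- a, 1:])"
proof -
  let ?Ac = "map_mat complex_of_real A"
  have Ac: "?Ac \<in> carrier_mat n n" using A by simp
  obtain as where cp: "char_poly ?Ac = (\<Prod>a\<leftarrow>as. [:- a, 1:])"
    using char_poly_factorized[OF Ac] by blast
  have real: "Im a = 0" if a: "a \<in> set as" for a
  proof -
    have "eigenvalue ?Ac a"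
      using eigenvalue_root_char_poly[OF Ac] linear_poly_root[OF a] cp by simp
    then obtain v where v: "v \<in> carrier_vec n" "v \<noteq> 0\<^sub>v n" "?Ac *\<^sub>v v = a \<cdot>\<^sub>v v"
      unfolding eigenvalue_def eigenvector_def using A by auto
    from v obtain i0 where i0: "i0 < n" "v $ i0 \<noteq> 0" by (metis eq_vecI index_zero_vec(1,2) carrier_vecD)
    show "Im a = 0"
    proof (rule real_eigenvalue_of_symmetric[of n "\<lambda>i j. A $$ (i,j)" "\<lambda>i. v $ i" a i0])
      fix i assume i: "i < n"
      have "(?Ac *\<^sub>v v) $ i = (\<Sum>j<n. of_real (A $$ (i,j)) * v $ j)"
        using i A v(1) by (auto simp: scalar_prod_def lessThan_atLeast0)
      then show "(\<Sum>j<n. of_real (A $$ (i,j)) * v $ j) = a * v $ i" using v i by simp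
    qed (use sym i0 in auto)
  qed
  have "map_poly complex_of_real (\<Prod>a\<leftarrow>map Re as. [:- a, 1:]) = (\<Prod>a\<leftarrow>as. [:- a, 1:])"
    using real
  proof (induction as)
    case (Cons a as)
    have "complex_of_real (Re a) = a" using Cons.prems by (simp add: complex_eq_iff)
    then have "map_poly complex_of_real [:-Re a,1:] = [:-a,1:]" by (simp add: map_poly_pCons)
    moreover have "map_poly complex_of_real (\<Prod>x\<leftarrow>map Re (a#as). [:-x,1:]) =
       map_poly complex_of_real [:-Re a,1:] * map_poly complex_of_real (\<Prod>x\<leftarrow>map Re as. [:-x,1:])"
      by (simp only: list.map prod_list.Cons of_real_poly.hom_mult)
    ultimately show ?case using Cons by simp
  qed simp
  also have "\<dots> = map_poly complex_of_real (char_poly A)"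
    using cp of_real_hom.char_poly_hom[OF A] by metis
  finally show ?thesis by (metis that of_real_poly.injectivity)
qed

lemma char_poly_symmetric_sorted_factors:
  fixes A :: "real mat"
  assumes A: "A \<in> carrier_mat n n" and sym: "\<And>i j. i < n \<Longrightarrow> j < n \<Longrightarrow> A $$ (i,j) = A $$ (j,i)"
  shows "\<exists>ls. length ls = n \<and> char_poly A = (\<Prod>a\<leftarrow>ls. [:- a, 1:]) \<and>
      sorted_wrt (\<lambda>a b. \<bar>b\<bar> \<le> \<bar>a\<bar>) ls"
proof -
  obtain es where cp: "char_poly A = (\<Prod>a\<leftarrow>es. [:- a, 1:])"
    using char_poly_symmetric_real_factors[OF A sym] by blast
  define ls where "ls = sort_key (\<lambda>x. - \<bar>x\<bar>) es"
  have "mset ls = mset es" unfolding ls_def by simp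
  then have cp_ls: "char_poly A = (\<Prod>a\<leftarrow>ls. [:- a, 1:])"
    unfolding cp by (metis mset_map prod_mset_prod_list)
  moreover have "sorted_wrt (\<lambda>a b. \<bar>b\<bar> \<le> \<bar>a\<bar>) ls"
    using sorted_sort_key[of "\<lambda>x. - \<bar>x\<bar>" es] unfolding ls_def sorted_map by simp
  moreover have "length ls = n"
    using degree_monic_char_poly[OF A] degree_linear_factors[of uminus ls] cp_ls by simp
  ultimately show ?thesis by blast
qed

lemma scalar_prod_self_pos_real:
  "v \<in> carrier_vec n \<Longrightarrow> v \<noteq> 0\<^sub>v n \<Longrightarrow> (v :: real vec) \<bullet> v > 0"
  using conjugate_square_greater_0_vec[of v n] by simp

lemma scalar_prod_normalize_real:
  assumes "v \<in> carrier_vec n" "v \<noteq> 0\<^sub>v n"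
  shows "((1 / sqrt (v \<bullet> v)) \<cdot>\<^sub>v v) \<bullet> ((1 / sqrt (v \<bullet> v)) \<cdot>\<^sub>v (v :: real vec)) = 1"
proof -
  have pos: "v \<bullet> v > 0" using scalar_prod_self_pos_real[OF assms] .
  have "sqrt (v \<bullet> v) * sqrt (v \<bullet> v) = v \<bullet> v" using pos by simp
  then show ?thesis using assms pos
    by (simp add: smult_scalar_prod_distrib[of _ n] scalar_prod_smult_distrib[of _ n] field_simps)
qed

lemma orthonormal_basis_with_first_col:
  fixes v :: "real vec"
  assumes v: "v \<in> carrier_vec n" and v1: "v \<bullet> v = 1" and n: "n \<noteq> 0"
  obtains W where "W \<in> carrier_mat n n" "transpose_mat W * W = 1\<^sub>m n" "col W 0 = v"
proof -
  have v0: "v \<noteq> 0\<^sub>v n" using v1 v by auto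
  interpret cof_vec_space n "TYPE(real)" .
  define b where "b = basis_completion v"
  define ws where "ws = gram_schmidt n b"
  from basis_completion[OF v v0, folded b_def]
  have dist_b: "distinct b" and indep: "\<not> lin_dep (set b)" and b: "set b \<subseteq> carrier_vec n"
    and hdb: "hd b = v" and len_b: "length b = n" by auto
  from hdb len_b n obtain vs where bv: "b = v # vs" by (cases b, auto)
  from gram_schmidt_result[OF b dist_b indep refl, folded ws_def]
  have ws: "set ws \<subseteq> carrier_vec n" "corthogonal ws" "length ws = n"
    by (auto simp: len_b)
  have ws0: "ws ! 0 = v"
    using gram_schmidt_hd[OF v, of vs, folded bv ws_def] ws(3) n by (metis hd_conv_nth list.size(3))
  define us where "us = map (\<lambda>w. (1 / sqrt (w \<bullet> w)) \<cdot>\<^sub>v w) ws"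
  have wsc: "\<And>i. i < n \<Longrightarrow> ws ! i \<in> carrier_vec n" using ws by auto
  have ortho: "\<And>i j. i < n \<Longrightarrow> j < n \<Longrightarrow> (ws ! i \<bullet> ws ! j = 0) = (i \<noteq> j)"
    using corthogonalD[OF ws(2)] ws(3) by simp
  have usc: "\<And>i. i < n \<Longrightarrow> us ! i \<in> carrier_vec n" unfolding us_def using ws wsc by auto
  have usp: "us ! i \<bullet> us ! j = (if i = j then 1 else 0)" if i: "i < n" and j: "j < n" for i j
  proof (cases "i = j")
    case True
    have "ws ! i \<noteq> 0\<^sub>v n" using ortho[OF i i] wsc[OF i] by auto
    then show ?thesis unfolding us_def using True i ws scalar_prod_normalize_real[OF wsc[OF i]] by simp
  next
    case False
    then show ?thesis unfolding us_def using i j ws wsc ortho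
      by (simp add: smult_scalar_prod_distrib[of _ n] scalar_prod_smult_distrib[of _ n])
  qed
  define W where "W = mat_of_cols n us"
  have lus: "length us = n" unfolding us_def using ws by simp
  have W: "W \<in> carrier_mat n n" unfolding W_def using lus by auto
  have colW: "\<And>i. i < n \<Longrightarrow> col W i = us ! i" unfolding W_def using lus usc by simp
  show ?thesis
  proof (rule that[OF W])
    show "transpose_mat W * W = 1\<^sub>m n"
      by (rule eq_matI) (use W colW usp in auto)
    show "col W 0 = v" using colW[of 0] n ws0 ws(3) v1 unfolding us_def by simp
  qed
qed

lemma unit_eigenvector_exists:
  fixes A :: "real mat"
  assumes A: "A \<in> carrier_mat n n" and root: "poly (char_poly A) e = 0"
  obtains v where "v \<in> carrier_vec n" "v \<bullet> v = 1" "A *\<^sub>v v = e \<cdot>\<^sub>v v" "n \<noteq> 0"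
proof -
  obtain v0 where v0: "v0 \<in> carrier_vec n" "v0 \<noteq> 0\<^sub>v n" "A *\<^sub>v v0 = e \<cdot>\<^sub>v v0"
    using eigenvalue_root_char_poly[OF A] root A unfolding eigenvalue_def eigenvector_def by auto
  define v where "v = (1 / sqrt (v0 \<bullet> v0)) \<cdot>\<^sub>v v0"
  show ?thesis
  proof (rule that)
    show "v \<in> carrier_vec n" unfolding v_def using v0 by simp
    show "v \<bullet> v = 1" unfolding v_def by (rule scalar_prod_normalize_real[OF v0(1,2)])
    show "A *\<^sub>v v = e \<cdot>\<^sub>v v"
      unfolding v_def using A v0 by (simp add: mult_mat_vec smult_smult_assoc mult.commute)
    show "n \<noteq> 0" using v0 by auto
  qed
qed

lemma transpose_symmetric_conj:
  fixes A W :: "'a :: comm_semiring_0 mat"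
  assumes A: "A \<in> carrier_mat n n" and W: "W \<in> carrier_mat n n" and sym: "transpose_mat A = A"
  shows "transpose_mat (transpose_mat W * A * W) = transpose_mat W * A * W"
proof -
  have "transpose_mat (transpose_mat W * A * W) = transpose_mat W * transpose_mat (transpose_mat W * A)"
    by (rule transpose_mult) (use W A in auto)
  also have "transpose_mat (transpose_mat W * A) = transpose_mat A * W"
    by (subst transpose_mult[of _ n n]) (use W A in auto)
  also have "transpose_mat W * (transpose_mat A * W) = transpose_mat W * A * W"
    unfolding sym by (rule assoc_mult_mat[symmetric]) (use W A in auto)
  finally show ?thesis .
qed

lemma orthogonal_conj_eigenvector_block:
  fixes A W :: "real mat"
  assumes A: "A \<in> carrier_mat (Suc m) (Suc m)" and sym: "transpose_mat A = A"
    and W: "W \<in> carrier_mat (Suc m) (Suc m)" and WW: "transpose_mat W * W = 1\<^sub>m (Suc m)"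
    and eigen: "A *\<^sub>v col W 0 = e \<cdot>\<^sub>v col W 0"
  obtains A3 where "A3 \<in> carrier_mat m m" "transpose_mat A3 = A3"
    "transpose_mat W * A * W = four_block_mat (mat 1 1 (\<lambda>_. e)) (0\<^sub>m 1 m) (0\<^sub>m m 1) A3"
proof -
  define n where "n = Suc m"
  define A' where "A' = transpose_mat W * A * W"
  have A': "A' \<in> carrier_mat n n" unfolding A'_def n_def using W A by auto
  have symA': "transpose_mat A' = A'" unfolding A'_def using transpose_symmetric_conj[OF A W sym] .
  have col0: "A' $$ (i,0) = (if i = 0 then e else 0)" if i: "i < n" for i
  proof -
    have "A' $$ (i,0) = col W i \<bullet> (A *\<^sub>v col W 0)"
      unfolding A'_def using i W A n_def by (simp add: assoc_mult_mat[of _ n n _ n _ n] col_mult2 mult_mat_vec_def)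
    also have "\<dots> = e * (transpose_mat W * W) $$ (i,0)"
      using W i eigen n_def by (simp add: scalar_prod_smult_distrib[of _ n])
    finally show ?thesis using WW i n_def by simp
  qed
  have row0: "A' $$ (0,j) = (if j = 0 then e else 0)" if j: "j < n" for j
    using arg_cong[OF symA', of "\<lambda>M. M $$ (0,j)"] col0[OF j] A' j n_def by simp
  define A3 where "A3 = mat m m (\<lambda>(i,j). A' $$ (Suc i, Suc j))"
  show ?thesis
  proof (rule that)
    show "A3 \<in> carrier_mat m m" unfolding A3_def by simp
    show "transpose_mat A3 = A3"
    proof (rule eq_matI)
      fix i j assume "i < dim_row A3" "j < dim_col A3"
      then have ij: "i < m" "j < m" unfolding A3_def by auto
      have "A' $$ (Suc j, Suc i) = transpose_mat A' $$ (Suc i, Suc j)" using A' ij n_def by simp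
      then show "transpose_mat A3 $$ (i,j) = A3 $$ (i,j)" using ij symA' unfolding A3_def by simp
    qed (auto simp: A3_def)
    show "transpose_mat W * A * W = four_block_mat (mat 1 1 (\<lambda>_. e)) (0\<^sub>m 1 m) (0\<^sub>m m 1) A3"
      unfolding A'_def[symmetric] using A' col0 row0 n_def
      by (intro eq_matI) (auto simp: A3_def less_Suc_eq_0_disj)
  qed
qed

lemma orthogonal_block_conj:
  fixes Q3 E A3 :: "real mat"
  assumes Q3: "Q3 \<in> carrier_mat m m" and QQ3: "transpose_mat Q3 * Q3 = 1\<^sub>m m"
    and E: "E \<in> carrier_mat 1 1" and A3: "A3 \<in> carrier_mat m m"
  defines "B \<equiv> four_block_mat (1\<^sub>m 1) (0\<^sub>m 1 m) (0\<^sub>m m 1) Q3"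
  shows "transpose_mat B * B = 1\<^sub>m (Suc m)"
    and "transpose_mat B * four_block_mat E (0\<^sub>m 1 m) (0\<^sub>m m 1) A3 * B =
         four_block_mat E (0\<^sub>m 1 m) (0\<^sub>m m 1) (transpose_mat Q3 * A3 * Q3)"
proof -
  have Q3T: "transpose_mat Q3 \<in> carrier_mat m m" using Q3 by simp
  have BT: "transpose_mat B = four_block_mat (1\<^sub>m 1) (0\<^sub>m 1 m) (0\<^sub>m m 1) (transpose_mat Q3)"
    unfolding B_def by (subst transpose_four_block_mat) (use Q3 in auto)
  have "transpose_mat B * B = four_block_mat (1\<^sub>m 1 * 1\<^sub>m 1 + 0\<^sub>m 1 m * 0\<^sub>m m 1) (1\<^sub>m 1 * 0\<^sub>m 1 m + 0\<^sub>m 1 m * Q3)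
      (0\<^sub>m m 1 * 1\<^sub>m 1 + transpose_mat Q3 * 0\<^sub>m m 1) (0\<^sub>m m 1 * 0\<^sub>m 1 m + transpose_mat Q3 * Q3)"
    by (subst BT, unfold B_def, rule mult_four_block_mat) (use Q3 Q3T in auto)
  then show "transpose_mat B * B = 1\<^sub>m (Suc m)" using Q3 Q3T QQ3 by simp
  have Q3A3: "transpose_mat Q3 * A3 \<in> carrier_mat m m" using Q3T A3 by simp
  have "transpose_mat B * four_block_mat E (0\<^sub>m 1 m) (0\<^sub>m m 1) A3 =
      four_block_mat (1\<^sub>m 1 * E + 0\<^sub>m 1 m * 0\<^sub>m m 1) (1\<^sub>m 1 * 0\<^sub>m 1 m + 0\<^sub>m 1 m * A3)
      (0\<^sub>m m 1 * E + transpose_mat Q3 * 0\<^sub>m m 1) (0\<^sub>m m 1 * 0\<^sub>m 1 m + transpose_mat Q3 * A3)"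
    unfolding BT by (rule mult_four_block_mat) (use Q3T E A3 in auto)
  also have "\<dots> = four_block_mat E (0\<^sub>m 1 m) (0\<^sub>m m 1) (transpose_mat Q3 * A3)"
    using Q3T E A3 by simp
  also have "\<dots> * B = four_block_mat (E * 1\<^sub>m 1 + 0\<^sub>m 1 m * 0\<^sub>m m 1) (E * 0\<^sub>m 1 m + 0\<^sub>m 1 m * Q3)
      (0\<^sub>m m 1 * 1\<^sub>m 1 + (transpose_mat Q3 * A3) * 0\<^sub>m m 1) (0\<^sub>m m 1 * 0\<^sub>m 1 m + (transpose_mat Q3 * A3) * Q3)"
    unfolding B_def
    by (rule mult_four_block_mat[of E 1 1 "0\<^sub>m 1 m" m "0\<^sub>m m 1" m "transpose_mat Q3 * A3"
          "1\<^sub>m 1" 1 "0\<^sub>m 1 m" m "0\<^sub>m m 1" Q3]) (use Q3 Q3A3 E in auto)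
  also have "\<dots> = four_block_mat E (0\<^sub>m 1 m) (0\<^sub>m m 1) (transpose_mat Q3 * A3 * Q3)"
    using Q3 Q3A3 E by (simp add: right_mult_zero_mat[OF Q3A3])
  finally show "transpose_mat B * four_block_mat E (0\<^sub>m 1 m) (0\<^sub>m m 1) A3 * B =
      four_block_mat E (0\<^sub>m 1 m) (0\<^sub>m m 1) (transpose_mat Q3 * A3 * Q3)" .
qed

lemma char_poly_orthogonal_conj:
  fixes A W :: "real mat"
  assumes A: "A \<in> carrier_mat n n" and W: "W \<in> carrier_mat n n" and WW: "transpose_mat W * W = 1\<^sub>m n"
  shows "char_poly (transpose_mat W * A * W) = char_poly A"
proof -
  have WT: "transpose_mat W \<in> carrier_mat n n" using W by simp
  have "similar_mat (transpose_mat W * A * W) A"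
    unfolding similar_mat_def similar_mat_wit_def Let_def
    using mat_mult_left_right_inverse[OF WT W WW] A W WW
    by (intro exI[of _ "transpose_mat W"] exI[of _ W]) auto
  then show ?thesis by (simp add: char_poly_similar)
qed

lemma char_poly_eigen_block:
  assumes "A3 \<in> carrier_mat m m"
  shows "char_poly (four_block_mat (mat 1 1 (\<lambda>_. e)) (0\<^sub>m 1 m) (0\<^sub>m m 1) A3) = [:-e,1:] * char_poly A3"
proof -
  have "char_poly (four_block_mat (mat 1 1 (\<lambda>_. e)) (0\<^sub>m 1 m) (0\<^sub>m m 1) A3) = char_poly (mat 1 1 (\<lambda>_. e)) * char_poly A3"
    by (rule char_poly_four_block_zeros_col[OF _ _ assms]) simp_all
  also have "char_poly (mat 1 1 (\<lambda>_. e)) = [:-e,1:]"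
    by (simp add: char_poly_defs det_def sign_def)
  finally show ?thesis .
qed

definition diag_list_mat :: "real list \<Rightarrow> nat \<Rightarrow> real mat" where
  "diag_list_mat es n = mat n n (\<lambda>(i,j). if i = j then es ! i else 0)"

theorem real_symmetric_spectral:
  fixes A :: "real mat"
  assumes "A \<in> carrier_mat n n" "transpose_mat A = A" "char_poly A = (\<Prod>a\<leftarrow>es. [:-a,1:])"
  shows "\<exists>Q \<in> carrier_mat n n. transpose_mat Q * Q = 1\<^sub>m n \<and> transpose_mat Q * A * Q = diag_list_mat es n"
  using assms
proof (induction es arbitrary: n A)
  case Nil
  then have "n = 0" using degree_monic_char_poly[of A n] by simp
  then show ?case using Nil(1) by (intro bexI[of _ "1\<^sub>m 0"]) (auto simp: diag_list_mat_def)
next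
  case (Cons e es n A)
  note A = Cons(2) and symA = Cons(3) and cpA = Cons(4)
  obtain v where v: "v \<in> carrier_vec n" "v \<bullet> v = 1" "A *\<^sub>v v = e \<cdot>\<^sub>v v" and n: "n \<noteq> 0"
    using unit_eigenvector_exists[OF A] cpA by auto
  obtain W where W: "W \<in> carrier_mat n n" and WW: "transpose_mat W * W = 1\<^sub>m n" and cW: "col W 0 = v"
    using orthonormal_basis_with_first_col[OF v(1,2) n] by blast
  obtain m where nm: "n = Suc m" using n by (cases n) auto
  define E where "E = mat 1 1 (\<lambda>_. e)"
  obtain A3 where A3: "A3 \<in> carrier_mat m m" and symA3: "transpose_mat A3 = A3"
    and blk: "transpose_mat W * A * W = four_block_mat E (0\<^sub>m 1 m) (0\<^sub>m m 1) A3"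
    using orthogonal_conj_eigenvector_block[of A m W e] A symA W WW cW v(3) nm unfolding E_def by auto
  have E: "E \<in> carrier_mat 1 1" unfolding E_def by simp
  have "[:-e,1:] * char_poly A3 = [:-e,1:] * (\<Prod>a\<leftarrow>es. [:-a,1:])"
    using char_poly_orthogonal_conj[OF A W WW] blk char_poly_eigen_block[OF A3] cpA unfolding E_def by simp
  then have "char_poly A3 = (\<Prod>a\<leftarrow>es. [:-a,1:])"
    by (metis mult_cancel_left pCons_eq_0_iff zero_neq_one)
  then obtain Q3 where Q3: "Q3 \<in> carrier_mat m m" and QQ3: "transpose_mat Q3 * Q3 = 1\<^sub>m m"
    and D3: "transpose_mat Q3 * A3 * Q3 = diag_list_mat es m"
    using Cons.IH[OF A3 symA3] by blast
  define B where "B = four_block_mat (1\<^sub>m 1) (0\<^sub>m 1 m) (0\<^sub>m m 1) Q3"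
  have B: "B \<in> carrier_mat n n" unfolding B_def using Q3 nm by auto
  note block = orthogonal_block_conj[OF Q3 QQ3 E A3, folded B_def nm]
  have "transpose_mat (W * B) * (W * B) = transpose_mat B * ((transpose_mat W * W) * B)"
    using W B by (simp add: transpose_mult[of _ n n _ n] assoc_mult_mat[of _ n n _ n _ n])
  then have QQ: "transpose_mat (W * B) * (W * B) = 1\<^sub>m n" using WW B block(1) by simp
  have "transpose_mat (W * B) * A * (W * B) = transpose_mat B * (transpose_mat W * A * W) * B"
    using W B A by (simp add: transpose_mult[of _ n n _ n] assoc_mult_mat[of _ n n _ n _ n])
  also have "\<dots> = diag_list_mat (e # es) n"
    unfolding blk block(2) D3 using nm
    by (intro eq_matI) (auto simp: diag_list_mat_def E_def less_Suc_eq_0_disj split: if_splits)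
  finally show ?case using QQ W B by (intro bexI[of _ "W * B"]) auto
qed

section \<open>Cubic forms\<close>

lemma abs_index_le_supnorm: "v \<in> carrier_vec n \<Longrightarrow> a < n \<Longrightarrow> \<bar>v $ a\<bar> \<le> supnorm v"
  unfolding supnorm_def by (intro Max_ge) auto

lemma supnorm_nonneg: "v \<in> carrier_vec n \<Longrightarrow> 0 < n \<Longrightarrow> 0 \<le> supnorm v"
  using abs_index_le_supnorm[of v n 0] by linarith

lemma carrier_vec_add_unit: "x \<in> carrier_vec n \<Longrightarrow> x + s \<cdot>\<^sub>v unit_vec n i \<in> carrier_vec n"
  by simp

lemma pderiv_at_eqI:
  assumes "\<And>s. f (x + s \<cdot>\<^sub>v unit_vec n i) = g s" "(g has_real_derivative d) (at 0)"
  shows "pderiv_at n f i x = d"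
proof -
  have "(\<lambda>s. f (x + s \<cdot>\<^sub>v unit_vec n i)) = g" using assms(1) by auto
  then show ?thesis unfolding pderiv_at_def
    by (intro some_equality) (use assms(2) DERIV_unique in auto)
qed

lemma sum_lessThan_indicator:
  assumes "(i::nat) < n"
  shows "(\<Sum>a<n. (if a = i then 1 else 0) * (G a :: real)) = G i"
proof -
  have "(\<Sum>a<n. (if a = i then 1 else 0) * G a) = (\<Sum>a<n. if a = i then G a else 0)"
    by (rule sum.cong) auto
  then show ?thesis using assms by simp
qed

lemma DERIV_linear_form:
  fixes x :: "real vec" and L :: "nat \<Rightarrow> real"
  assumes i: "i < n"
  shows "((\<lambda>s. \<Sum>c<n. L c * (x $ c + s * (if c = i then 1 else 0))) has_real_derivative L i) (at 0)"
proof -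
  have "((\<lambda>s. \<Sum>c<n. L c * (x $ c + s * (if c = i then 1 else 0))) has_real_derivative
      (\<Sum>c<n. L c * (if c = i then 1 else 0))) (at 0)"
    by (intro DERIV_sum DERIV_cmult) (auto intro!: derivative_eq_intros)
  moreover have "(\<Sum>c<n. L c * (if c = i then 1 else 0)) = L i" using i
    by (simp add: if_distrib sum.delta cong: if_cong)
  ultimately show ?thesis by simp
qed

lemma DERIV_bilinear_affine:
  "((\<lambda>s. ((a::real) + s*da) * (b + s*db)) has_real_derivative (da*b + a*db)) (at 0)"
  by (auto intro!: derivative_eq_intros simp: algebra_simps)

lemma DERIV_trilinear_affine:
  "((\<lambda>s. ((a::real) + s*da) * (b + s*db) * (c + s*dc)) has_real_derivative (da*b*c + a*db*c + a*b*dc)) (at 0)"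
  by (auto intro!: derivative_eq_intros simp: algebra_simps)

lemma DERIV_quadratic_form:
  fixes x :: "real vec" and T :: "nat \<Rightarrow> nat \<Rightarrow> real"
  assumes i: "i < n" and sym: "\<And>b c. T b c = T c b"
  shows "((\<lambda>s. \<Sum>b<n. \<Sum>c<n. T b c * ((x $ b + s * (if b = i then 1 else 0)) * (x $ c + s * (if c = i then 1 else 0))))
     has_real_derivative 2 * (\<Sum>c<n. T i c * x $ c)) (at 0)"
proof -
  let ?d = "\<lambda>a. (if a = i then 1 else 0) :: real"
  have "((\<lambda>s. \<Sum>b<n. \<Sum>c<n. T b c * ((x $ b + s * ?d b) * (x $ c + s * ?d c)))
     has_real_derivative (\<Sum>b<n. \<Sum>c<n. T b c * (?d b * x $ c + x $ b * ?d c))) (at 0)"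
    by (intro DERIV_sum DERIV_cmult DERIV_bilinear_affine)
  moreover have "(\<Sum>b<n. \<Sum>c<n. T b c * (?d b * x $ c + x $ b * ?d c))
     = (\<Sum>b<n. \<Sum>c<n. T b c * ?d b * x $ c) + (\<Sum>b<n. \<Sum>c<n. T b c * x $ b * ?d c)"
    by (simp add: algebra_simps sum.distrib)
  moreover have "(\<Sum>b<n. \<Sum>c<n. T b c * ?d b * x $ c) = (\<Sum>c<n. T i c * x $ c)"
  proof -
    have "(\<Sum>b<n. \<Sum>c<n. T b c * ?d b * x $ c) = (\<Sum>b<n. ?d b * (\<Sum>c<n. T b c * x $ c))"
      by (simp add: sum_distrib_left mult_ac)
    thus ?thesis using sum_lessThan_indicator[OF i] by simp
  qed
  moreover have "(\<Sum>b<n. \<Sum>c<n. T b c * x $ b * ?d c) = (\<Sum>b<n. T b i * x $ b)"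
  proof -
    have "\<And>b. (\<Sum>c<n. T b c * x $ b * ?d c) = (\<Sum>c<n. ?d c * (T b c * x $ b))"
      by (simp add: mult_ac)
    thus ?thesis using sum_lessThan_indicator[OF i] by simp
  qed
  moreover have "(\<Sum>b<n. T b i * x $ b) = (\<Sum>c<n. T i c * x $ c)" using sym by simp
  ultimately show ?thesis by simp
qed


lemma DERIV_cubic_form:
  fixes x :: "real vec" and S :: "nat \<Rightarrow> nat \<Rightarrow> nat \<Rightarrow> real"
  assumes i: "i < n" and s1: "\<And>a b c. S a b c = S b a c" and s2: "\<And>a b c. S a b c = S a c b"
  shows "((\<lambda>s. \<Sum>a<n. \<Sum>b<n. \<Sum>c<n. S a b c * ((x $ a + s * (if a = i then 1 else 0)) *
       (x $ b + s * (if b = i then 1 else 0)) * (x $ c + s * (if c = i then 1 else 0))))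
     has_real_derivative 3 * (\<Sum>b<n. \<Sum>c<n. S i b c * x $ b * x $ c)) (at 0)"
proof -
  let ?d = "\<lambda>a. (if a = i then 1 else 0) :: real"
  have deriv: "((\<lambda>s. \<Sum>a<n. \<Sum>b<n. \<Sum>c<n. S a b c * ((x $ a + s * ?d a) * (x $ b + s * ?d b) * (x $ c + s * ?d c)))
     has_real_derivative (\<Sum>a<n. \<Sum>b<n. \<Sum>c<n. S a b c * (
        ?d a * x $ b * x $ c + x $ a * ?d b * x $ c + x $ a * x $ b * ?d c))) (at 0)"
    by (intro DERIV_sum DERIV_cmult DERIV_trilinear_affine)
  have "(\<Sum>a<n. \<Sum>b<n. \<Sum>c<n. S a b c * (
        ?d a * x $ b * x $ c + x $ a * ?d b * x $ c + x $ a * x $ b * ?d c))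
     = (\<Sum>a<n. \<Sum>b<n. \<Sum>c<n. S a b c * ?d a * x $ b * x $ c) +
       (\<Sum>a<n. \<Sum>b<n. \<Sum>c<n. S a b c * x $ a * ?d b * x $ c) +
       (\<Sum>a<n. \<Sum>b<n. \<Sum>c<n. S a b c * x $ a * x $ b * ?d c)"
    by (simp add: distrib_left sum.distrib mult.assoc)
  moreover have "(\<Sum>a<n. \<Sum>b<n. \<Sum>c<n. S a b c * ?d a * x $ b * x $ c) = (\<Sum>b<n. \<Sum>c<n. S i b c * x $ b * x $ c)"
  proof -
    have "(\<Sum>a<n. \<Sum>b<n. \<Sum>c<n. S a b c * ?d a * x $ b * x $ c) = (\<Sum>a<n. ?d a * (\<Sum>b<n. \<Sum>c<n. S a b c * x $ b * x $ c))"
      by (simp add: sum_distrib_left mult_ac)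
    thus ?thesis using sum_lessThan_indicator[OF i] by simp
  qed
  moreover have "(\<Sum>a<n. \<Sum>b<n. \<Sum>c<n. S a b c * x $ a * ?d b * x $ c) = (\<Sum>a<n. \<Sum>c<n. S a i c * x $ a * x $ c)"
  proof -
    have "\<And>a. (\<Sum>b<n. \<Sum>c<n. S a b c * x $ a * ?d b * x $ c) = (\<Sum>b<n. ?d b * (\<Sum>c<n. S a b c * x $ a * x $ c))"
      by (simp add: sum_distrib_left mult_ac)
    thus ?thesis using sum_lessThan_indicator[OF i] by simp
  qed
  moreover have "(\<Sum>a<n. \<Sum>b<n. \<Sum>c<n. S a b c * x $ a * x $ b * ?d c) = (\<Sum>a<n. \<Sum>b<n. S a b i * x $ a * x $ b)"
  proof -
    have "\<And>a b. (\<Sum>c<n. S a b c * x $ a * x $ b * ?d c) = (\<Sum>c<n. ?d c * (S a b c * x $ a * x $ b))"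
      by (simp add: mult_ac)
    thus ?thesis using sum_lessThan_indicator[OF i] by simp
  qed
  moreover have "(\<Sum>a<n. \<Sum>c<n. S a i c * x $ a * x $ c) = (\<Sum>b<n. \<Sum>c<n. S i b c * x $ b * x $ c)"
    using s1 by simp
  moreover have "(\<Sum>a<n. \<Sum>b<n. S a b i * x $ a * x $ b) = (\<Sum>b<n. \<Sum>c<n. S i b c * x $ b * x $ c)"
  proof -
    have e: "\<And>a b. S a b i = S i a b" using s1 s2 by metis
    show ?thesis by (rule sum.cong[OF refl], rule sum.cong[OF refl], subst e, rule refl)
  qed
  ultimately have "(\<Sum>a<n. \<Sum>b<n. \<Sum>c<n. S a b c * (
        ?d a * x $ b * x $ c + x $ a * ?d b * x $ c + x $ a * x $ b * ?d c)) = 3 * (\<Sum>b<n. \<Sum>c<n. S i b c * x $ b * x $ c)"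
    by linarith
  with deriv show ?thesis by (simp only:)
qed

locale symmetric_cubic_form =
  fixes n :: nat and c :: "real vec \<Rightarrow> real" and S :: "nat \<Rightarrow> nat \<Rightarrow> nat \<Rightarrow> real"
  assumes swap12: "\<And>a b d. S a b d = S b a d" and swap23: "\<And>a b d. S a b d = S a d b"
    and form: "\<And>x. x \<in> carrier_vec n \<Longrightarrow> c x = (\<Sum>a<n. \<Sum>b<n. \<Sum>d<n. S a b d * (x $ a * x $ b * x $ d))"
begin

lemma pderiv_at_form:
  assumes y: "y \<in> carrier_vec n" and j: "j < n"
  shows "pderiv_at n c j y = 3 * (\<Sum>b<n. \<Sum>d<n. S j b d * y $ b * y $ d)"
proof (rule pderiv_at_eqI)
  show "c (y + s \<cdot>\<^sub>v unit_vec n j) = (\<Sum>a<n. \<Sum>b<n. \<Sum>d<n. S a b d * ((y $ a + s * (if a = j then 1 else 0)) *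
       (y $ b + s * (if b = j then 1 else 0)) * (y $ d + s * (if d = j then 1 else 0))))" for s
    unfolding form[OF carrier_vec_add_unit[OF y]] using y by (intro sum.cong refl) (simp add: unit_vec_def)
qed (rule DERIV_cubic_form[OF j swap12 swap23])

lemma pd2_form:
  assumes y: "y \<in> carrier_vec n" and i: "i < n" and j: "j < n"
  shows "pd2 n c i j y = 6 * (\<Sum>d<n. S i j d * y $ d)"
  unfolding pd2_def
proof (rule pderiv_at_eqI)
  show "pderiv_at n c j (y + s \<cdot>\<^sub>v unit_vec n i) = (\<Sum>b<n. \<Sum>d<n. (3 * S j b d) *
      ((y $ b + s * (if b = i then 1 else 0)) * (y $ d + s * (if d = i then 1 else 0))))" for s
    unfolding pderiv_at_form[OF carrier_vec_add_unit[OF y] j] using y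
    by (simp add: sum_distrib_left mult_ac) (intro sum.cong refl, simp add: unit_vec_def)
  have "((\<lambda>s. \<Sum>b<n. \<Sum>d<n. (3 * S j b d) * ((y $ b + s * (if b = i then 1 else 0)) *
      (y $ d + s * (if d = i then 1 else 0)))) has_real_derivative 2 * (\<Sum>d<n. (3 * S j i d) * y $ d)) (at 0)"
    by (rule DERIV_quadratic_form[OF i]) (use swap23 in auto)
  moreover have "2 * (\<Sum>d<n. (3 * S j i d) * y $ d) = 6 * (\<Sum>d<n. S i j d * y $ d)"
    using swap12 by (simp add: sum_distrib_left mult_ac)
  ultimately show "((\<lambda>s. \<Sum>b<n. \<Sum>d<n. (3 * S j b d) * ((y $ b + s * (if b = i then 1 else 0)) *
      (y $ d + s * (if d = i then 1 else 0)))) has_real_derivative 6 * (\<Sum>d<n. S i j d * y $ d)) (at 0)"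
    by simp
qed

lemma pd3_form:
  assumes y: "y \<in> carrier_vec n" and i: "i < n" and j: "j < n" and k: "k < n"
  shows "pd3 n c i j k y = 6 * S j k i"
  unfolding pd3_def
proof (rule pderiv_at_eqI)
  show "pd2 n c j k (y + s \<cdot>\<^sub>v unit_vec n i) = (\<Sum>d<n. (6 * S j k d) * (y $ d + s * (if d = i then 1 else 0)))" for s
    unfolding pd2_form[OF carrier_vec_add_unit[OF y] j k] using y
    by (simp add: sum_distrib_left mult_ac) (intro sum.cong refl, simp add: unit_vec_def)
qed (rule DERIV_linear_form[OF i])

lemma abs_coeff_le_cnorm:
  assumes "a < n" "b < n" "d < n"
  shows "\<bar>S a b d\<bar> \<le> cnorm n c"
proof -
  let ?T = "{\<bar>pd3 n c i j k (0\<^sub>v n)\<bar> | i j k. i < n \<and> j < n \<and> k < n}"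
  have "?T \<subseteq> (\<lambda>(i,j,k). \<bar>pd3 n c i j k (0\<^sub>v n)\<bar>) ` ({..<n} \<times> {..<n} \<times> {..<n})"
  proof
    fix z assume "z \<in> ?T"
    then obtain i j k where "z = \<bar>pd3 n c i j k (0\<^sub>v n)\<bar>" "i < n" "j < n" "k < n" by blast
    then show "z \<in> (\<lambda>(i,j,k). \<bar>pd3 n c i j k (0\<^sub>v n)\<bar>) ` ({..<n} \<times> {..<n} \<times> {..<n})"
      by (intro image_eqI[of _ _ "(i,j,k)"]) auto
  qed
  then have "finite ?T" by (rule finite_subset) simp
  moreover have "\<bar>pd3 n c d a b (0\<^sub>v n)\<bar> \<in> ?T" using assms by blast
  ultimately have "\<bar>pd3 n c d a b (0\<^sub>v n)\<bar> \<le> Max ?T" by simp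
  then show ?thesis using pd3_form[of "0\<^sub>v n" d a b] assms unfolding cnorm_def by simp
qed

lemma cnorm_pos:
  assumes "\<exists>x \<in> carrier_vec n. c x \<noteq> 0"
  shows "0 < cnorm n c"
proof -
  have "\<exists>a<n. \<exists>b<n. \<exists>d<n. S a b d \<noteq> 0"
  proof (rule ccontr)
    assume "\<not> ?thesis"
    then have "c x = 0" if "x \<in> carrier_vec n" for x using form[OF that] by simp
    then show False using assms by blast
  qed
  then obtain a b d where "a < n" "b < n" "d < n" "S a b d \<noteq> 0" by blast
  then show ?thesis using abs_coeff_le_cnorm[of a b d] by simp
qed

lemma hess_index:
  "x \<in> carrier_vec n \<Longrightarrow> i < n \<Longrightarrow> j < n \<Longrightarrow> hess n c x $$ (i,j) = 6 * (\<Sum>l<n. S i j l * x $ l) / cnorm n c"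
  unfolding hess_def by (simp add: pd2_form)

lemma hess_symmetric:
  "x \<in> carrier_vec n \<Longrightarrow> i < n \<Longrightarrow> j < n \<Longrightarrow> hess n c x $$ (i,j) = hess n c x $$ (j,i)"
  using swap12 by (simp add: hess_index)

lemma abs_hess_index_le:
  assumes nonzero: "\<exists>x \<in> carrier_vec n. c x \<noteq> 0" and t: "t \<in> carrier_vec n" and "a < n" "b < n"
  shows "\<bar>hess n c t $$ (a,b)\<bar> \<le> 6 * n * supnorm t"
proof -
  have K: "0 < cnorm n c" using cnorm_pos[OF nonzero] .
  have "\<bar>\<Sum>l<n. S a b l * t $ l\<bar> \<le> (\<Sum>l<n. cnorm n c * supnorm t)"
    using abs_coeff_le_cnorm abs_index_le_supnorm[OF t] K assms
    by (intro order.trans[OF sum_abs] sum_mono) (auto simp: abs_mult intro!: mult_mono)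
  then show ?thesis using K t assms by (simp add: hess_index abs_mult pos_divide_le_eq mult_ac)
qed

end

lemma symmetric_cubic_coefficients:
  assumes "is_cubic_form n c"
  obtains S where "symmetric_cubic_form n c S"
proof -
  obtain C where C: "\<And>x. x \<in> carrier_vec n \<Longrightarrow> c x = (\<Sum>i<n. \<Sum>j<n. \<Sum>k<n. C i j k * x $ i * x $ j * x $ k)"
    using assms unfolding is_cubic_form_def by blast
  define S where "S a b d = (C a b d + C a d b + C b a d + C b d a + C d a b + C d b a) / 6" for a b d
  have swap: "S a b d = S b a d" "S a b d = S a d b" for a b d
    unfolding S_def by (simp_all add: algebra_simps)
  have form: "c x = (\<Sum>a<n. \<Sum>b<n. \<Sum>d<n. S a b d * (x $ a * x $ b * x $ d))" if x: "x \<in> carrier_vec n" for x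
  proof -
    define X where "X a b d = x $ a * x $ b * x $ d" for a b d
    have X: "\<And>a b d. X a b d = X a d b" "\<And>a b d. X a b d = X b a d" unfolding X_def by (auto simp: mult_ac)
    have swap12: "(\<Sum>a<n. \<Sum>b<n. \<Sum>d<n. F a b d) = (\<Sum>a<n. \<Sum>b<n. \<Sum>d<n. (F b a d :: real))" for F
      by (rule sum.swap)
    have swap23: "(\<Sum>a<n. \<Sum>b<n. \<Sum>d<n. F a b d) = (\<Sum>a<n. \<Sum>b<n. \<Sum>d<n. (F a d b :: real))" for F
      by (rule sum.cong[OF refl], rule sum.swap)
    let ?B = "\<Sum>a<n. \<Sum>b<n. \<Sum>d<n. C a b d * X a b d"
    txt \<open>As X is symmetric, permuting the indices of C amounts to reordering the summations.\<close>
    have sum_acb: "(\<Sum>a<n. \<Sum>b<n. \<Sum>d<n. C a d b * X a b d) = ?B"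
      using swap23[of "\<lambda>a b d. C a d b * X a b d"] X by simp
    have sum_bad: "(\<Sum>a<n. \<Sum>b<n. \<Sum>d<n. C b a d * X a b d) = ?B"
      using swap12[of "\<lambda>a b d. C b a d * X a b d"] X by simp
    have sum_bda: "(\<Sum>a<n. \<Sum>b<n. \<Sum>d<n. C b d a * X a b d) = ?B"
      using swap12[of "\<lambda>a b d. C b d a * X a b d"] swap23[of "\<lambda>a b d. C a d b * X b a d"] X by simp
    have sum_dab: "(\<Sum>a<n. \<Sum>b<n. \<Sum>d<n. C d a b * X a b d) = ?B"
      using swap23[of "\<lambda>a b d. C d a b * X a b d"] swap12[of "\<lambda>a b d. C b a d * X a d b"] X by simp
    have sum_dba: "(\<Sum>a<n. \<Sum>b<n. \<Sum>d<n. C d b a * X a b d) = ?B"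
      using swap12[of "\<lambda>a b d. C d b a * X a b d"] sum_dab X by simp
    have "6 * (\<Sum>a<n. \<Sum>b<n. \<Sum>d<n. S a b d * X a b d) =
      (\<Sum>a<n. \<Sum>b<n. \<Sum>d<n. C a b d * X a b d + C a d b * X a b d + C b a d * X a b d +
         C b d a * X a b d + C d a b * X a b d + C d b a * X a b d)"
      unfolding S_def by (simp only: sum_distrib_left) (intro sum.cong refl, simp add: field_simps)
    also have "\<dots> = 6 * ?B" using sum_acb sum_bad sum_bda sum_dab sum_dba by (simp only: sum.distrib)
    finally show ?thesis using C[OF x] unfolding X_def by (simp add: mult.assoc)
  qed
  show ?thesis by (rule that, rule symmetric_cubic_form.intro) (fact swap form)+
qed

section \<open>Minors of the Hessian\<close>

lemma finite_minor_idx: "finite (minor_idx n k)"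
  by (rule finite_subset[of _ "Pow {..<n} \<times> Pow {..<n}"]) (auto simp: minor_idx_def)

lemma lessThan_in_minor_idx: "k \<le> n \<Longrightarrow> ({..<k},{..<k}) \<in> minor_idx n k"
  unfolding minor_idx_def by auto

lemma Max_minor_idx_ge:
  assumes "(I,J) \<in> minor_idx n k"
  shows "(g I J :: real) \<le> Max {g I J | I J. (I,J) \<in> minor_idx n k}"
proof -
  have "{g I J | I J. (I,J) \<in> minor_idx n k} = (\<lambda>(I,J). g I J) ` minor_idx n k" by auto
  then show ?thesis using assms finite_minor_idx by (auto intro!: Max_ge image_eqI[of _ _ "(I,J)"])
qed

lemma Max_minor_idx_le:
  assumes "k \<le> n" "\<And>I J. (I,J) \<in> minor_idx n k \<Longrightarrow> (g I J :: real) \<le> B"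
  shows "Max {g I J | I J. (I,J) \<in> minor_idx n k} \<le> B"
proof -
  have "{g I J | I J. (I,J) \<in> minor_idx n k} = (\<lambda>(I,J). g I J) ` minor_idx n k" by auto
  then show ?thesis using assms finite_minor_idx lessThan_in_minor_idx[OF assms(1)]
    by (subst Max_le_iff) auto
qed

lemma pick_less_of_minor_idx:
  assumes "(I,J) \<in> minor_idx n k" "i < k"
  shows "pick I i < n" "pick J i < n"
  using assms pick_in_set[of i I] pick_in_set[of i J] unfolding minor_idx_def by auto

lemma Delta_eq_det_pick:
  assumes "(I,J) \<in> minor_idx n k"
  shows "Delta n c I J y = det (mat k k (\<lambda>(i,j). hess n c y $$ (pick I i, pick J j)))"
proof -
  have "{i. i < n \<and> i \<in> I} = I" "{i. i < n \<and> i \<in> J} = J" "card I = k" "card J = k"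
    using assms unfolding minor_idx_def by auto
  then show ?thesis unfolding Delta_def submatrix_def by (simp add: hess_def)
qed

context symmetric_cubic_form
begin

lemma hess_index_add_smult:
  assumes "x \<in> carrier_vec n" "y \<in> carrier_vec n" "i < n" "j < n"
  shows "hess n c (x + s \<cdot>\<^sub>v y) $$ (i,j) = hess n c x $$ (i,j) + s * hess n c y $$ (i,j)"
  using assms by (simp add: hess_index sum.distrib sum_distrib_left algebra_simps add_divide_distrib)

lemma hess_index_unit_vec:
  assumes "l < n" "i < n" "j < n"
  shows "hess n c (unit_vec n l) $$ (i,j) = 6 * S i j l / cnorm n c"
proof -
  have "(\<Sum>d<n. S i j d * unit_vec n l $ d) = (\<Sum>d<n. (if d = l then 1 else 0) * S i j d)"
    by (intro sum.cong refl) (simp add: unit_vec_def)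
  also have "\<dots> = S i j l" by (rule sum_lessThan_indicator[OF assms(1)])
  finally show ?thesis using assms by (simp add: hess_index)
qed

lemma hess_index_unit_vec_sum:
  assumes "t \<in> carrier_vec n" "i < n" "j < n"
  shows "hess n c t $$ (i,j) = (\<Sum>l<n. t $ l * hess n c (unit_vec n l) $$ (i,j))"
proof -
  have "(\<Sum>l<n. t $ l * hess n c (unit_vec n l) $$ (i,j)) = (\<Sum>l<n. t $ l * (6 * S i j l / cnorm n c))"
    using assms by (intro sum.cong refl) (simp add: hess_index_unit_vec)
  then show ?thesis by (simp add: hess_index[OF assms] sum_divide_distrib sum_distrib_left mult_ac)
qed

text \<open>Since H_c is linear, each entry of J^(c,k)(x0) t is the derivative at s = 0 of the
  corresponding minor of H_c(x0) + s H_c(t).\<close>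

lemma jacobian_minor_eq_det_derivative:
  assumes x0: "x0 \<in> carrier_vec n" and t: "t \<in> carrier_vec n" and IJ: "(I,J) \<in> minor_idx n k"
  shows "(\<Sum>l<n. pderiv_at n (Delta n c I J) l x0 * t $ l) =
    det_derivative k (\<lambda>i j. hess n c x0 $$ (pick I i, pick J j)) (\<lambda>i j. hess n c t $$ (pick I i, pick J j))"
proof -
  let ?H0 = "\<lambda>i j. hess n c x0 $$ (pick I i, pick J j)"
  let ?G = "\<lambda>l i j. hess n c (unit_vec n l) $$ (pick I i, pick J j)"
  note pick = pick_less_of_minor_idx[OF IJ]
  have partial: "pderiv_at n (Delta n c I J) l x0 = det_derivative k ?H0 (?G l)" if l: "l < n" for l
  proof (rule pderiv_at_eqI)
    show "Delta n c I J (x0 + s \<cdot>\<^sub>v unit_vec n l) = det (mat k k (\<lambda>(i,j). ?H0 i j + s * ?G l i j))" for s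
      unfolding Delta_eq_det_pick[OF IJ] using x0 pick
      by (intro arg_cong[of _ _ det] eq_matI) (auto simp: hess_index_add_smult)
  qed (rule has_real_derivative_det_affine)
  have "(\<Sum>l<n. pderiv_at n (Delta n c I J) l x0 * t $ l) = (\<Sum>l<n. t $ l * det_derivative k ?H0 (?G l))"
    using partial by (simp add: mult.commute)
  also have "\<dots> = det_derivative k ?H0 (\<lambda>i j. \<Sum>l<n. t $ l * ?G l i j)"
    by (rule det_derivative_sum_right[symmetric]) simp
  also have "\<dots> = det_derivative k ?H0 (\<lambda>i j. hess n c t $$ (pick I i, pick J j))"
    using pick by (intro det_derivative_cong) (simp_all add: hess_index_unit_vec_sum[OF t])
  finally show ?thesis .
qed

end

section \<open>Sorted eigenframes\<close>

locale sorted_eigenframe =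
  fixes n :: nat and H :: "nat \<Rightarrow> nat \<Rightarrow> real" and Q :: "real mat" and ls :: "real list"
  assumes orthonormal: "\<And>i j. i < n \<Longrightarrow> j < n \<Longrightarrow> (\<Sum>a<n. Q $$ (a,i) * Q $$ (a,j)) = (if i = j then 1 else 0)"
    and spectral: "\<And>a c. a < n \<Longrightarrow> c < n \<Longrightarrow> H a c = (\<Sum>l<n. Q $$ (a,l) * ls ! l * Q $$ (c,l))"
    and length_eigs: "length ls = n"
    and sorted_eigs: "sorted_wrt (\<lambda>a b. \<bar>b\<bar> \<le> \<bar>a\<bar>) ls"

lemma sorted_eigenframe_exists:
  fixes H :: "real mat"
  assumes H: "H \<in> carrier_mat n n" and sym: "\<And>i j. i < n \<Longrightarrow> j < n \<Longrightarrow> H $$ (i,j) = H $$ (j,i)"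
    and cp: "char_poly H = (\<Prod>a\<leftarrow>ls. [:-a,1:])"
    and ls: "length ls = n" "sorted_wrt (\<lambda>a b. \<bar>b\<bar> \<le> \<bar>a\<bar>) ls"
  obtains Q where "Q \<in> carrier_mat n n" "sorted_eigenframe n (\<lambda>a c. H $$ (a,c)) Q ls"
proof -
  have "transpose_mat H = H" by (rule eq_matI) (use H sym in auto)
  then obtain Q where Q: "Q \<in> carrier_mat n n" and QQ: "transpose_mat Q * Q = 1\<^sub>m n"
    and D: "transpose_mat Q * H * Q = diag_list_mat ls n"
    using real_symmetric_spectral[OF H _ cp] by blast
  have QT: "transpose_mat Q \<in> carrier_mat n n" using Q by simp
  have QQ': "Q * transpose_mat Q = 1\<^sub>m n" using mat_mult_left_right_inverse[OF QT Q QQ] .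
  have "Q * (diag_list_mat ls n * transpose_mat Q) = Q * ((transpose_mat Q * H * Q) * transpose_mat Q)"
    using D by simp
  also have "\<dots> = (Q * transpose_mat Q) * H * (Q * transpose_mat Q)"
    using Q QT H by (simp add: assoc_mult_mat[of _ n n _ n _ n])
  finally have HQ: "H = Q * (diag_list_mat ls n * transpose_mat Q)" using QQ' H by simp
  show ?thesis
  proof (rule that[OF Q], unfold_locales)
    show "(\<Sum>a<n. Q $$ (a,i) * Q $$ (a,j)) = (if i = j then 1 else 0)" if "i < n" "j < n" for i j
      using arg_cong[OF QQ, of "\<lambda>M. M $$ (i,j)"] Q that by (simp add: scalar_prod_def lessThan_atLeast0)
    show "H $$ (a,c) = (\<Sum>l<n. Q $$ (a,l) * ls ! l * Q $$ (c,l))" if "a < n" "c < n" for a c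
    proof -
      have "H $$ (a,c) = (\<Sum>l<n. Q $$ (a,l) * (\<Sum>m<n. diag_list_mat ls n $$ (l,m) * Q $$ (c,m)))"
        using arg_cong[OF HQ, of "\<lambda>M. M $$ (a,c)"] Q that
        by (simp add: scalar_prod_def lessThan_atLeast0 diag_list_mat_def)
      also have "\<dots> = (\<Sum>l<n. Q $$ (a,l) * ls ! l * Q $$ (c,l))"
      proof (rule sum.cong[OF refl])
        fix l assume l: "l \<in> {..<n}"
        have "(\<Sum>m<n. diag_list_mat ls n $$ (l,m) * Q $$ (c,m)) = (\<Sum>m<n. if m = l then ls ! l * Q $$ (c,m) else 0)"
          using l by (intro sum.cong refl) (auto simp: diag_list_mat_def)
        then show "Q $$ (a,l) * (\<Sum>m<n. diag_list_mat ls n $$ (l,m) * Q $$ (c,m)) = Q $$ (a,l) * ls ! l * Q $$ (c,l)"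
          using l by simp
      qed
      finally show ?thesis .
    qed
  qed (use ls in auto)
qed

context sorted_eigenframe
begin

lemma abs_frame_le_one:
  assumes "a < n" "l < n"
  shows "\<bar>Q $$ (a,l)\<bar> \<le> 1"
proof -
  have "(Q $$ (a,l))^2 \<le> (\<Sum>a'<n. (Q $$ (a',l))^2)"
    by (rule member_le_sum) (use assms in auto)
  also have "\<dots> = 1" using orthonormal[OF assms(2) assms(2)] by (simp add: power2_eq_square)
  finally show ?thesis using abs_le_square_iff[of "Q $$ (a,l)" 1] by simp
qed

lemma abs_prod_frame_le_one:
  "(\<And>i. i \<in> A \<Longrightarrow> f i < n \<and> g i < n) \<Longrightarrow> \<bar>\<Prod>i\<in>A. Q $$ (f i, g i)\<bar> \<le> 1"
  unfolding abs_prod using abs_frame_le_one by (intro prod_le_1) auto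

lemma frame_coordinates:
  assumes Y: "\<And>a. a < n \<Longrightarrow> Y a = (\<Sum>l<n. Q $$ (a,l) * z l)" and l: "l < n"
  shows "z l = (\<Sum>a<n. Y a * Q $$ (a,l))"
proof -
  have "(\<Sum>a<n. Y a * Q $$ (a,l)) = (\<Sum>a<n. \<Sum>m<n. Q $$ (a,m) * z m * Q $$ (a,l))"
    using Y by (simp add: sum_distrib_right)
  also have "\<dots> = (\<Sum>m<n. \<Sum>a<n. Q $$ (a,m) * z m * Q $$ (a,l))" by (rule sum.swap)
  also have "\<dots> = (\<Sum>m<n. z m * (\<Sum>a<n. Q $$ (a,m) * Q $$ (a,l)))"
    by (simp add: sum_distrib_left mult_ac)
  also have "\<dots> = (\<Sum>m<n. if m = l then z m else 0)" using orthonormal l by (intro sum.cong refl) auto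
  also have "\<dots> = z l" using l by simp
  finally show ?thesis by simp
qed

text \<open>By Cauchy--Binet each b x b minor of H is a sum of minors of the diagonal matrix of
  eigenvalues, weighted by products of entries of Q.\<close>

lemma abs_minor_le:
  assumes IJ: "(I,J) \<in> minor_idx n b"
  shows "\<bar>det (mat b b (\<lambda>(i,j). H (pick I i) (pick J j)))\<bar> \<le>
    fact b * real (card (index_maps b n))^2 * (\<Prod>i<b. \<bar>ls ! i\<bar>)"
proof -
  define u where "u a i = Q $$ (pick I i, a)" for a i
  define v where "v c j = Q $$ (pick J j, c)" for c j
  define L where "L a c = (if a = c then ls ! a else 0)" for a c
  have "H (pick I i) (pick J j) = (\<Sum>a<n. \<Sum>c<n. u a i * L a c * v c j)" if "i < b" "j < b" for i j
  proof -
    have "(\<Sum>a<n. \<Sum>c<n. u a i * L a c * v c j) = (\<Sum>a<n. \<Sum>c<n. if c = a then u a i * ls ! a * v a j else 0)"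
      unfolding L_def by (intro sum.cong refl) auto
    also have "\<dots> = (\<Sum>a<n. u a i * ls ! a * v a j)" by (simp add: sum.delta)
    finally show ?thesis
      unfolding u_def v_def using spectral pick_less_of_minor_idx[OF IJ that(1)] pick_less_of_minor_idx[OF IJ that(2)]
      by simp
  qed
  then have "det (mat b b (\<lambda>(i,j). H (pick I i) (pick J j))) =
      (\<Sum>f\<in>index_maps b n. \<Sum>g\<in>index_maps b n. (\<Prod>i<b. u (f i) i) * (\<Prod>j<b. v (g j) j) *
        det (mat b b (\<lambda>(i,j). L (f i) (g j))))"
    by (simp only: det_mat_bilinear_sum[symmetric]) (intro arg_cong[of _ _ det] eq_matI, auto)
  then have "\<bar>det (mat b b (\<lambda>(i,j). H (pick I i) (pick J j)))\<bar> \<le>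
      (\<Sum>f\<in>index_maps b n. \<Sum>g\<in>index_maps b n. fact b * (\<Prod>i<b. \<bar>ls ! i\<bar>))"
  proof (simp only:, intro order.trans[OF sum_abs] sum_mono order.trans[OF sum_abs])
    fix f g assume f: "f \<in> index_maps b n" and g: "g \<in> index_maps b n"
    have "\<bar>\<Prod>i<b. u (f i) i\<bar> \<le> 1" "\<bar>\<Prod>j<b. v (g j) j\<bar> \<le> 1"
      unfolding u_def v_def using pick_less_of_minor_idx[OF IJ] index_maps_less f g
      by (auto intro!: abs_prod_frame_le_one)
    moreover have "\<bar>det (mat b b (\<lambda>(i,j). L (f i) (g j)))\<bar> \<le> fact b * (\<Prod>i<b. \<bar>ls ! i\<bar>)"
      unfolding L_def using abs_det_diagonal_index_maps_le[OF sorted_eigs, of f b g] f length_eigs by simp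
    ultimately have "\<bar>\<Prod>i<b. u (f i) i\<bar> * \<bar>\<Prod>j<b. v (g j) j\<bar> * \<bar>det (mat b b (\<lambda>(i,j). L (f i) (g j)))\<bar>
        \<le> 1 * 1 * (fact b * (\<Prod>i<b. \<bar>ls ! i\<bar>))"
      by (intro mult_mono) auto
    then show "\<bar>(\<Prod>i<b. u (f i) i) * (\<Prod>j<b. v (g j) j) * det (mat b b (\<lambda>(i,j). L (f i) (g j)))\<bar>
        \<le> fact b * (\<Prod>i<b. \<bar>ls ! i\<bar>)"
      by (simp add: abs_mult)
  qed
  also have "\<dots> = fact b * real (card (index_maps b n))^2 * (\<Prod>i<b. \<bar>ls ! i\<bar>)"
    by (simp add: power2_eq_square)
  finally show ?thesis .
qed

end

section \<open>Bordered determinants\<close>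

lemma id_in_index_maps: "k \<le> n \<Longrightarrow> id \<in> index_maps k n"
  unfolding index_maps_def by auto

text \<open>The arguments of det_derivative below are U^T A V and U^T B V, with U = (u a i) and V = (v c j).\<close>

lemma abs_det_derivative_congruence_le:
  fixes u v A B :: "nat \<Rightarrow> nat \<Rightarrow> real"
  assumes kn: "k \<le> n"
    and u: "\<And>f. f \<in> index_maps k n \<Longrightarrow> \<bar>\<Prod>i<k. u (f i) i\<bar> \<le> \<alpha>"
    and v: "\<And>g. g \<in> index_maps k n \<Longrightarrow> \<bar>\<Prod>j<k. v (g j) j\<bar> \<le> \<beta>"
    and minors: "\<And>I J. (I,J) \<in> minor_idx n k \<Longrightarrow>
      \<bar>det_derivative k (\<lambda>i j. A (pick I i) (pick J j)) (\<lambda>i j. B (pick I i) (pick J j))\<bar> \<le> D"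
  shows "\<bar>det_derivative k (\<lambda>i j. \<Sum>a<n. \<Sum>c<n. u a i * A a c * v c j) (\<lambda>i j. \<Sum>a<n. \<Sum>c<n. u a i * B a c * v c j)\<bar>
    \<le> real (card (index_maps k n))^2 * \<alpha> * \<beta> * D"
proof -
  have \<alpha>: "0 \<le> \<alpha>" and \<beta>: "0 \<le> \<beta>" using u v id_in_index_maps[OF kn] by force+
  have D: "0 \<le> D" using minors[OF lessThan_in_minor_idx[OF kn]] by linarith
  have bound: "\<bar>(\<Prod>i<k. u (f i) i) * (\<Prod>j<k. v (g j) j) *
      det_derivative k (\<lambda>i j. A (f i) (g j)) (\<lambda>i j. B (f i) (g j))\<bar> \<le> \<alpha> * \<beta> * D"
    if f: "f \<in> index_maps k n" and g: "g \<in> index_maps k n" for f g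
  proof -
    obtain I J e where "(I,J) \<in> minor_idx n k" "\<bar>e\<bar> \<le> 1"
      and eq: "det_derivative k (\<lambda>i j. A (f i) (g j)) (\<lambda>i j. B (f i) (g j)) =
        e * det_derivative k (\<lambda>i j. A (pick I i) (pick J j)) (\<lambda>i j. B (pick I i) (pick J j))"
      using det_derivative_index_maps_minor[OF f g kn] by blast
    then have "\<bar>det_derivative k (\<lambda>i j. A (f i) (g j)) (\<lambda>i j. B (f i) (g j))\<bar> \<le> 1 * D"
      unfolding eq abs_mult using minors D by (intro mult_mono) auto
    then show ?thesis
      unfolding abs_mult using u[OF f] v[OF g] \<alpha> \<beta> D by (intro mult_mono) auto
  qed
  have "\<bar>\<Sum>f\<in>index_maps k n. \<Sum>g\<in>index_maps k n. (\<Prod>i<k. u (f i) i) * (\<Prod>j<k. v (g j) j) *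
      det_derivative k (\<lambda>i j. A (f i) (g j)) (\<lambda>i j. B (f i) (g j))\<bar> \<le>
      (\<Sum>f\<in>index_maps k n. \<Sum>g\<in>index_maps k n. \<alpha> * \<beta> * D)"
    by (intro order.trans[OF sum_abs] sum_mono order.trans[OF sum_abs] bound)
  then show ?thesis
    unfolding det_derivative_bilinear_sum by (simp add: power2_eq_square mult_ac)
qed

lemma det_derivative_bordered_diagonal:
  assumes "\<And>i j. i < Suc b \<Longrightarrow> j < Suc b \<Longrightarrow> A i j = (if i = j then (if i < b then d i else \<gamma>) else 0)"
  shows "det_derivative (Suc b) A B =
    B b b * (\<Prod>j<b. d j) + \<gamma> * (\<Sum>i<b. B i i * (\<Prod>j\<in>{0..<b}-{i}. d j))"
proof -
  define d' where "d' i = (if i < b then d i else \<gamma>)" for i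
  have "det_derivative (Suc b) A B = det_derivative (Suc b) (\<lambda>i j. if i = j then d' i else 0) B"
    using assms unfolding d'_def by (intro det_derivative_cong) auto
  also have "\<dots> = (\<Sum>i\<in>insert b {0..<b}. B i i * (\<Prod>j\<in>insert b {0..<b}-{i}. d' j))"
    unfolding det_derivative_diagonal by (simp add: atLeast0_lessThan_Suc)
  also have "\<dots> = B b b * (\<Prod>j\<in>{0..<b}. d' j) + (\<Sum>i\<in>{0..<b}. B i i * (d' b * (\<Prod>j\<in>{0..<b}-{i}. d' j)))"
    by (subst sum.insert) (auto simp: insert_Diff_if intro!: sum.cong)
  also have "\<dots> = B b b * (\<Prod>j<b. d j) + \<gamma> * (\<Sum>i<b. B i i * (\<Prod>j\<in>{0..<b}-{i}. d j))"
  proof -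
    have "(\<Prod>j\<in>{0..<b}. d' j) = (\<Prod>j<b. d j)" "\<And>i. (\<Prod>j\<in>{0..<b}-{i}. d' j) = (\<Prod>j\<in>{0..<b}-{i}. d j)"
      unfolding d'_def by (auto simp: lessThan_atLeast0 intro!: prod.cong)
    then show ?thesis by (simp add: d'_def lessThan_atLeast0 sum_distrib_left mult_ac)
  qed
  finally show ?thesis .
qed

context sorted_eigenframe
begin

lemma bilinear_spectral:
  "(\<Sum>a<n. \<Sum>c<n. U a * H a c * V c) = (\<Sum>l<n. ls ! l * (\<Sum>a<n. U a * Q $$ (a,l)) * (\<Sum>c<n. V c * Q $$ (c,l)))"
proof -
  have "(\<Sum>a<n. \<Sum>c<n. U a * H a c * V c) = (\<Sum>a<n. \<Sum>c<n. \<Sum>l<n. U a * Q $$ (a,l) * ls ! l * Q $$ (c,l) * V c)"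
    by (intro sum.cong refl) (simp add: spectral sum_distrib_left sum_distrib_right mult_ac)
  also have "\<dots> = (\<Sum>a<n. \<Sum>l<n. \<Sum>c<n. U a * Q $$ (a,l) * ls ! l * Q $$ (c,l) * V c)"
    by (rule sum.cong[OF refl], rule sum.swap)
  also have "\<dots> = (\<Sum>l<n. \<Sum>a<n. \<Sum>c<n. U a * Q $$ (a,l) * ls ! l * Q $$ (c,l) * V c)"
    by (rule sum.swap)
  also have "\<dots> = (\<Sum>l<n. ls ! l * (\<Sum>a<n. U a * Q $$ (a,l)) * (\<Sum>c<n. V c * Q $$ (c,l)))"
    by (simp add: sum_distrib_left sum_distrib_right mult_ac)
  finally show ?thesis .
qed

definition bordered_frame :: "nat \<Rightarrow> (nat \<Rightarrow> real) \<Rightarrow> nat \<Rightarrow> nat \<Rightarrow> real" where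
  "bordered_frame b Y a i = (if i < b then Q $$ (a,i) else Y a)"

lemma bordered_frame_coordinates:
  assumes Y: "\<And>a. a < n \<Longrightarrow> Y a = (\<Sum>l<n. Q $$ (a,l) * z l)" and "i \<le> b" "b < n" "l < n"
  shows "(\<Sum>a<n. bordered_frame b Y a i * Q $$ (a,l)) = (if i < b then (if i = l then 1 else 0) else z l)"
  using assms orthonormal[of i l] frame_coordinates[OF Y, of l] unfolding bordered_frame_def by auto

lemma bordered_gram_diagonal:
  assumes Y: "\<And>a. a < n \<Longrightarrow> Y a = (\<Sum>l<n. Q $$ (a,l) * z l)" and z: "\<And>l. l < b \<Longrightarrow> z l = 0"
    and Y': "\<And>a. a < n \<Longrightarrow> Y' a = (\<Sum>l<n. Q $$ (a,l) * z' l)" and z': "\<And>l. l < b \<Longrightarrow> z' l = 0"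
    and bn: "b < n" and ij: "i \<le> b" "j \<le> b"
  shows "(\<Sum>a<n. \<Sum>c<n. bordered_frame b Y a i * H a c * bordered_frame b Y' c j) =
    (if i = j then (if i < b then ls ! i else (\<Sum>l<n. ls ! l * z l * z' l)) else 0)"
proof -
  let ?w = "\<lambda>z i l. if i < b then (if i = l then 1 else 0) else z l"
  have "(\<Sum>a<n. \<Sum>c<n. bordered_frame b Y a i * H a c * bordered_frame b Y' c j) =
      (\<Sum>l<n. ls ! l * ?w z i l * ?w z' j l)"
    unfolding bilinear_spectral
    using bordered_frame_coordinates[OF Y ij(1) bn] bordered_frame_coordinates[OF Y' ij(2) bn]
    by (intro sum.cong refl) simp
  also have "\<dots> = (if i = j then (if i < b then ls ! i else (\<Sum>l<n. ls ! l * z l * z' l)) else 0)"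
  proof (cases "i < b")
    case True
    then have "(\<Sum>l<n. ls ! l * ?w z i l * ?w z' j l) = (\<Sum>l<n. if l = i then ls ! l * ?w z' j l else 0)"
      by (intro sum.cong refl) auto
    also have "\<dots> = ls ! i * ?w z' j i" using True bn by (subst sum.delta) auto
    finally have "(\<Sum>l<n. ls ! l * ?w z i l * ?w z' j l) = ls ! i * ?w z' j i" .
    then show ?thesis using True z' ij by auto
  next
    case False
    then have i: "i = b" using ij by simp
    show ?thesis
    proof (cases "j < b")
      case True
      then have "(\<Sum>l<n. ls ! l * ?w z i l * ?w z' j l) = (\<Sum>l<n. if l = j then ls ! l * z l else 0)"
        using i by (intro sum.cong refl) auto
      also have "\<dots> = ls ! j * z j" using True bn by (subst sum.delta) auto
      finally have "(\<Sum>l<n. ls ! l * ?w z i l * ?w z' j l) = ls ! j * z j" .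
      then show ?thesis using True z i by simp
    next
      case False
      then show ?thesis using i ij by simp
    qed
  qed
  finally show ?thesis .
qed

lemma abs_prod_bordered_frame_le:
  assumes f: "f \<in> index_maps (Suc b) n" and bn: "b < n" and Y: "\<And>a. a < n \<Longrightarrow> \<bar>Y a\<bar> \<le> y"
  shows "\<bar>\<Prod>i<Suc b. bordered_frame b Y (f i) i\<bar> \<le> y"
proof -
  have "\<bar>\<Prod>i<b. bordered_frame b Y (f i) i\<bar> \<le> 1"
    unfolding bordered_frame_def using index_maps_less[OF f] bn
    by (simp add: abs_prod_frame_le_one[of "{..<b}" f id, simplified])
  moreover have "\<bar>bordered_frame b Y (f b) b\<bar> \<le> y"
    unfolding bordered_frame_def using Y index_maps_less[OF f] by simp
  ultimately have "\<bar>\<Prod>i<b. bordered_frame b Y (f i) i\<bar> * \<bar>bordered_frame b Y (f b) b\<bar> \<le> 1 * y"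
    by (intro mult_mono) auto
  then show ?thesis by (simp add: abs_mult)
qed

lemma abs_eigen_weighted_le:
  assumes z: "\<And>l. l < b \<Longrightarrow> z l = 0"
  shows "\<bar>\<Sum>l<n. ls ! l * z l * z' l\<bar> \<le> \<bar>ls ! b\<bar> * (\<Sum>l<n. \<bar>z l\<bar> * \<bar>z' l\<bar>)"
proof -
  have "\<bar>ls ! l * z l * z' l\<bar> \<le> \<bar>ls ! b\<bar> * (\<bar>z l\<bar> * \<bar>z' l\<bar>)" if l: "l < n" for l
  proof (cases "l < b")
    case False
    then have "\<bar>ls ! l\<bar> \<le> \<bar>ls ! b\<bar>"
      using sorted_wrt_nth_less[OF sorted_eigs, of b l] length_eigs l by (cases "l = b") auto
    then show ?thesis by (simp add: abs_mult mult_right_mono mult.assoc)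
  qed (simp add: z)
  then have "\<bar>\<Sum>l<n. ls ! l * z l * z' l\<bar> \<le> (\<Sum>l<n. \<bar>ls ! b\<bar> * (\<bar>z l\<bar> * \<bar>z' l\<bar>))"
    by (intro order.trans[OF sum_abs] sum_mono) auto
  then show ?thesis by (simp add: sum_distrib_left)
qed

lemma eig_last_pos:
  assumes P: "0 < (\<Prod>j<b. \<bar>ls ! j\<bar>)" and b: "1 \<le> b"
  shows "0 < \<bar>ls ! (b - 1)\<bar>"
proof -
  have "ls ! (b - 1) \<noteq> 0"
  proof
    assume "ls ! (b - 1) = 0"
    then have "(\<Prod>j<b. \<bar>ls ! j\<bar>) = 0" using b by (intro prod_zero) (auto intro!: bexI[of _ "b - 1"])
    with P show False by simp
  qed
  then show ?thesis by simp
qed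

lemma prod_eigs_remove_le:
  assumes P: "0 < (\<Prod>j<b. \<bar>ls ! j\<bar>)" and i: "i < b" and bn: "b \<le> n"
  shows "(\<Prod>j\<in>{0..<b}-{i}. \<bar>ls ! j\<bar>) \<le> (\<Prod>j<b. \<bar>ls ! j\<bar>) / \<bar>ls ! (b - 1)\<bar>"
proof -
  define P where "P = (\<Prod>j<b. \<bar>ls ! j\<bar>)"
  have last: "0 < \<bar>ls ! (b - 1)\<bar>" using eig_last_pos[OF P] i by simp
  have ge_last: "\<bar>ls ! (b - 1)\<bar> \<le> \<bar>ls ! i\<bar>"
    using sorted_wrt_nth_less[OF sorted_eigs, of i "b - 1"] length_eigs i bn by (cases "i = b - 1") auto
  have "P = \<bar>ls ! i\<bar> * (\<Prod>j\<in>{0..<b}-{i}. \<bar>ls ! j\<bar>)"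
    unfolding P_def lessThan_atLeast0 using i by (subst prod.remove[of _ i]) auto
  then have "(\<Prod>j\<in>{0..<b}-{i}. \<bar>ls ! j\<bar>) = P / \<bar>ls ! i\<bar>"
    using ge_last last by (simp add: field_simps)
  also have "\<dots> \<le> P / \<bar>ls ! (b - 1)\<bar>"
    using ge_last last P unfolding P_def by (intro divide_left_mono) auto
  finally show ?thesis unfolding P_def .
qed

lemma abs_frame_quadratic_le:
  fixes B :: "nat \<Rightarrow> nat \<Rightarrow> real" and h :: real
  assumes "i < n" and h: "\<And>a c. a < n \<Longrightarrow> c < n \<Longrightarrow> \<bar>B a c\<bar> \<le> h"
  shows "\<bar>\<Sum>a<n. \<Sum>c<n. Q $$ (a,i) * B a c * Q $$ (c,i)\<bar> \<le> n * n * h"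
proof -
  have "\<bar>Q $$ (a,i) * B a c * Q $$ (c,i)\<bar> \<le> 1 * h * 1" if "a < n" "c < n" for a c
    unfolding abs_mult using that assms abs_frame_le_one order.trans[OF abs_ge_zero h[OF that]]
    by (intro mult_mono) auto
  then have "\<bar>\<Sum>a<n. \<Sum>c<n. Q $$ (a,i) * B a c * Q $$ (c,i)\<bar> \<le> (\<Sum>a<n. \<Sum>c<n. h)"
    by (intro order.trans[OF sum_abs] sum_mono order.trans[OF sum_abs]) auto
  then show ?thesis by simp
qed

text \<open>Differentiating the (b+1) x (b+1) determinant of H + sH1 in the bordered frame
  produces the product of the b leading eigenvalues times Y^T H1 Y', plus a remainder controlled by the
  eigenvalue of index b+1; the derivative itself is bounded via the Jacobian of the minors.\<close>

lemma bordered_quadratic_bound: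
  fixes H1 :: "nat \<Rightarrow> nat \<Rightarrow> real" and h D y y' :: real
  assumes b: "1 \<le> b" "b < n"
    and Y: "\<And>a. a < n \<Longrightarrow> Y a = (\<Sum>l<n. Q $$ (a,l) * z l)" and z: "\<And>l. l < b \<Longrightarrow> z l = 0"
    and Y': "\<And>a. a < n \<Longrightarrow> Y' a = (\<Sum>l<n. Q $$ (a,l) * z' l)" and z': "\<And>l. l < b \<Longrightarrow> z' l = 0"
    and h: "\<And>a c. a < n \<Longrightarrow> c < n \<Longrightarrow> \<bar>H1 a c\<bar> \<le> h"
    and D: "\<And>I J. (I,J) \<in> minor_idx n (Suc b) \<Longrightarrow>
      \<bar>det_derivative (Suc b) (\<lambda>i j. H (pick I i) (pick J j)) (\<lambda>i j. H1 (pick I i) (pick J j))\<bar> \<le> D"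
    and y: "\<And>a. a < n \<Longrightarrow> \<bar>Y a\<bar> \<le> y" and y': "\<And>a. a < n \<Longrightarrow> \<bar>Y' a\<bar> \<le> y'"
    and P: "0 < (\<Prod>j<b. \<bar>ls ! j\<bar>)"
  shows "(\<Prod>j<b. \<bar>ls ! j\<bar>) * \<bar>\<Sum>a<n. \<Sum>c<n. Y a * H1 a c * Y' c\<bar> \<le>
    real (card (index_maps (Suc b) n))^2 * y * y' * D +
    \<bar>ls ! b\<bar> * (\<Sum>l<n. \<bar>z l\<bar> * \<bar>z' l\<bar>) * (b * (n * n * h)) * ((\<Prod>j<b. \<bar>ls ! j\<bar>) / \<bar>ls ! (b - 1)\<bar>)"
proof -
  define P where "P = (\<Prod>j<b. \<bar>ls ! j\<bar>)"
  define N where "N B i j = (\<Sum>a<n. \<Sum>c<n. bordered_frame b Y a i * B a c * bordered_frame b Y' c j)"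
    for B :: "nat \<Rightarrow> nat \<Rightarrow> real" and i j
  define \<gamma> where "\<gamma> = (\<Sum>l<n. ls ! l * z l * z' l)"
  define R where "R = (\<Sum>i<b. N H1 i i * (\<Prod>j\<in>{0..<b}-{i}. ls ! j))"
  have "det_derivative (Suc b) (N H) (N H1) = N H1 b b * (\<Prod>j<b. ls ! j) + \<gamma> * R"
    unfolding R_def
    by (rule det_derivative_bordered_diagonal)
      (use bordered_gram_diagonal[OF Y z Y' z' b(2)] in \<open>simp add: N_def \<gamma>_def\<close>)
  moreover have "N H1 b b = (\<Sum>a<n. \<Sum>c<n. Y a * H1 a c * Y' c)"
    unfolding N_def bordered_frame_def by simp
  ultimately have "P * \<bar>\<Sum>a<n. \<Sum>c<n. Y a * H1 a c * Y' c\<bar> = \<bar>det_derivative (Suc b) (N H) (N H1) - \<gamma> * R\<bar>"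
    unfolding P_def by (simp add: abs_mult abs_prod mult.commute)
  also have "\<dots> \<le> \<bar>det_derivative (Suc b) (N H) (N H1)\<bar> + \<bar>\<gamma>\<bar> * \<bar>R\<bar>"
    by (simp add: abs_mult[symmetric] abs_triangle_ineq4)
  also have "\<dots> \<le> real (card (index_maps (Suc b) n))^2 * y * y' * D +
      (\<bar>ls ! b\<bar> * (\<Sum>l<n. \<bar>z l\<bar> * \<bar>z' l\<bar>)) * (b * (n * n * h) * (P / \<bar>ls ! (b - 1)\<bar>))"
  proof (intro add_mono mult_mono)
    show "\<bar>det_derivative (Suc b) (N H) (N H1)\<bar> \<le> real (card (index_maps (Suc b) n))^2 * y * y' * D"
      unfolding N_def using b D
      by (intro abs_det_derivative_congruence_le abs_prod_bordered_frame_le y y') auto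
    show "\<bar>\<gamma>\<bar> \<le> \<bar>ls ! b\<bar> * (\<Sum>l<n. \<bar>z l\<bar> * \<bar>z' l\<bar>)"
      unfolding \<gamma>_def by (rule abs_eigen_weighted_le[OF z])
    have "\<bar>R\<bar> \<le> (\<Sum>i<b. \<bar>N H1 i i\<bar> * (\<Prod>j\<in>{0..<b}-{i}. \<bar>ls ! j\<bar>))"
      unfolding R_def by (rule order.trans[OF sum_abs]) (simp add: abs_mult abs_prod)
    also have "\<dots> \<le> (\<Sum>i<b. (n * n * h) * (P / \<bar>ls ! (b - 1)\<bar>))"
    proof (intro sum_mono mult_mono)
      fix i assume "i \<in> {..<b}"
      then show "\<bar>N H1 i i\<bar> \<le> n * n * h"
        unfolding N_def bordered_frame_def using b abs_frame_quadratic_le[of i H1 h] h by simp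
      show "(\<Prod>j\<in>{0..<b}-{i}. \<bar>ls ! j\<bar>) \<le> P / \<bar>ls ! (b - 1)\<bar>"
        unfolding P_def using prod_eigs_remove_le[OF P] \<open>i \<in> {..<b}\<close> b by simp
    qed (use h[of 0 0] b in \<open>auto intro!: prod_nonneg\<close>)
    finally show "\<bar>R\<bar> \<le> b * (n * n * h) * (P / \<bar>ls ! (b - 1)\<bar>)" by simp
  qed (auto intro!: sum_nonneg mult_nonneg_nonneg)
  finally show ?thesis unfolding P_def by (simp add: mult_ac)
qed

section \<open>The estimate on the trailing eigenspace\<close>

text \<open>The columns b, ..., n-1 of Q span the subspace Y of the theorem.\<close>

definition trailing_frame :: "nat \<Rightarrow> real mat" where
  "trailing_frame b = mat n (n - b) (\<lambda>(a,p). Q $$ (a, b + p))"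

lemma trailing_frame_carrier: "trailing_frame b \<in> carrier_mat n (n - b)"
  unfolding trailing_frame_def by simp

lemma trailing_frame_mult_vec:
  assumes w: "w \<in> carrier_vec (n - b)" and a: "a < n" and bn: "b \<le> n"
  shows "(trailing_frame b *\<^sub>v w) $ a = (\<Sum>l<n. Q $$ (a,l) * (if b \<le> l then w $ (l - b) else 0))"
proof -
  have split: "{..<n} = {..<b} \<union> {b..<n}" using bn by auto
  have "(\<Sum>l<n. Q $$ (a,l) * (if b \<le> l then w $ (l - b) else 0)) =
      (\<Sum>l<b. Q $$ (a,l) * (if b \<le> l then w $ (l - b) else 0)) +
      (\<Sum>l\<in>{b..<n}. Q $$ (a,l) * (if b \<le> l then w $ (l - b) else 0))"
    unfolding split by (rule sum.union_disjoint) auto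
  also have "\<dots> = (\<Sum>l\<in>{b..<n}. Q $$ (a,l) * w $ (l - b))"
    by (simp add: sum.neutral)
  also have "\<dots> = (\<Sum>p\<in>{0..<n-b}. Q $$ (a, b + p) * w $ p)"
    using sum.shift_bounds_nat_ivl[of "\<lambda>l. Q $$ (a,l) * w $ (l - b)" 0 b "n - b"] bn by (simp add: add.commute)
  finally show ?thesis
    using w a unfolding trailing_frame_def by (simp add: scalar_prod_def)
qed

lemma trailing_frame_coordinates:
  assumes y: "y \<in> carrier_vec (n - b)" and q: "q < n - b"
  shows "y $ q = (\<Sum>a<n. Q $$ (a, b + q) * (trailing_frame b *\<^sub>v y) $ a)"
proof -
  have "(\<Sum>a<n. Q $$ (a, b + q) * (trailing_frame b *\<^sub>v y) $ a) =
      (\<Sum>a<n. \<Sum>p<n-b. Q $$ (a, b + q) * (Q $$ (a, b + p) * y $ p))"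
    using y unfolding trailing_frame_def by (simp add: scalar_prod_def lessThan_atLeast0 sum_distrib_left)
  also have "\<dots> = (\<Sum>p<n-b. y $ p * (\<Sum>a<n. Q $$ (a, b + q) * Q $$ (a, b + p)))"
    by (subst sum.swap) (simp add: sum_distrib_left mult_ac)
  also have "\<dots> = (\<Sum>p<n-b. if p = q then y $ p else 0)"
    by (intro sum.cong refl) (use orthonormal q in auto)
  also have "\<dots> = y $ q" using q by simp
  finally show ?thesis by simp
qed

lemma trailing_frame_inj:
  "y \<in> carrier_vec (n - b) \<Longrightarrow> trailing_frame b *\<^sub>v y = 0\<^sub>v n \<Longrightarrow> y = 0\<^sub>v (n - b)"
  by (intro eq_vecI) (auto simp: trailing_frame_coordinates[of y b])

lemma abs_trailing_coordinate_le:
  assumes w: "w \<in> carrier_vec (n - b)" and q: "q < n - b"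
  shows "\<bar>w $ q\<bar> \<le> n * supnorm (trailing_frame b *\<^sub>v w)"
proof -
  have W: "trailing_frame b *\<^sub>v w \<in> carrier_vec n" using trailing_frame_carrier w by (rule mult_mat_vec_carrier)
  have "\<bar>w $ q\<bar> \<le> (\<Sum>a<n. \<bar>Q $$ (a, b + q) * (trailing_frame b *\<^sub>v w) $ a\<bar>)"
    unfolding trailing_frame_coordinates[OF w q] by (rule sum_abs)
  also have "\<dots> \<le> (\<Sum>a<n. 1 * supnorm (trailing_frame b *\<^sub>v w))"
    unfolding abs_mult using abs_frame_le_one abs_index_le_supnorm[OF W] q
    by (intro sum_mono mult_mono) auto
  finally show ?thesis by simp
qed

end

text \<open>The constant in front of the Jacobian term comes from bounding the b x b and the (b+1) x (b+1)
  minors by Cauchy--Binet, the other one from entrywise bounds.\<close>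

definition hessian_bound_const :: "nat \<Rightarrow> nat \<Rightarrow> real" where
  "hessian_bound_const n b = fact b * real (card (index_maps b n))^2 * real (card (index_maps (b + 1) n))^2
    + 6 * real b * real n ^ 6"

lemma hessian_bound_const_nonneg: "0 \<le> hessian_bound_const n b"
  unfolding hessian_bound_const_def by simp

lemma add_mult_le_sum_mult:
  fixes C1 C2 X1 X2 A :: real
  assumes "0 \<le> C1" "0 \<le> C2" "0 \<le> X1" "0 \<le> X2" "C1 + C2 \<le> A"
  shows "C1 * X1 + C2 * X2 \<le> A * (X1 + X2)"
proof -
  have "C1 * X1 + C2 * X2 \<le> (C1 + C2) * (X1 + X2)"
    using assms by (simp add: algebra_simps add_nonneg_nonneg)
  also have "\<dots> \<le> A * (X1 + X2)" using assms by (intro mult_right_mono) auto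
  finally show ?thesis .
qed

locale cubic_eigenframe =
  symmetric_cubic_form n c S + sorted_eigenframe n "\<lambda>a d. hess n c x0 $$ (a,d)" Q ls
  for n c S x0 Q ls +
  assumes x0: "x0 \<in> carrier_vec n" and nonzero: "\<exists>x \<in> carrier_vec n. c x \<noteq> 0"
begin

lemma Delta_norm_le:
  "b \<le> n \<Longrightarrow> Delta_norm n c b x0 \<le> fact b * real (card (index_maps b n))^2 * (\<Prod>i<b. \<bar>ls ! i\<bar>)"
  unfolding Delta_norm_def by (rule Max_minor_idx_le) (simp_all add: Delta_eq_det_pick abs_minor_le)

lemma abs_det_derivative_le_Jac_norm:
  assumes t: "t \<in> carrier_vec n" and IJ: "(I,J) \<in> minor_idx n k"
  shows "\<bar>det_derivative k (\<lambda>i j. hess n c x0 $$ (pick I i, pick J j)) (\<lambda>i j. hess n c t $$ (pick I i, pick J j))\<bar>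
    \<le> Jac_norm n c k x0 t"
  unfolding Jac_norm_def jacobian_minor_eq_det_derivative[OF x0 t IJ, symmetric] by (rule Max_minor_idx_ge[OF IJ])

lemma sum_trailing_coordinates_le:
  assumes "y \<in> carrier_vec (n - b)" "y' \<in> carrier_vec (n - b)"
  defines "z \<equiv> \<lambda>l. if b \<le> l then y $ (l - b) else 0" and "z' \<equiv> \<lambda>l. if b \<le> l then y' $ (l - b) else 0"
  shows "(\<Sum>l<n. \<bar>z l\<bar> * \<bar>z' l\<bar>) \<le> n * ((n * supnorm (trailing_frame b *\<^sub>v y)) * (n * supnorm (trailing_frame b *\<^sub>v y')))"
proof -
  have W: "trailing_frame b *\<^sub>v y \<in> carrier_vec n" "trailing_frame b *\<^sub>v y' \<in> carrier_vec n"
    using trailing_frame_carrier assms(1,2) by (auto intro: mult_mat_vec_carrier)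
  have "\<bar>z l\<bar> \<le> n * supnorm (trailing_frame b *\<^sub>v y)" "\<bar>z' l\<bar> \<le> n * supnorm (trailing_frame b *\<^sub>v y')"
    if "l < n" for l
    using that abs_trailing_coordinate_le[OF assms(1)] abs_trailing_coordinate_le[OF assms(2)]
      supnorm_nonneg[OF W(1)] supnorm_nonneg[OF W(2)]
    unfolding z_def z'_def by (auto simp: diff_less_mono)
  then have "(\<Sum>l<n. \<bar>z l\<bar> * \<bar>z' l\<bar>) \<le> (\<Sum>l<n. (n * supnorm (trailing_frame b *\<^sub>v y)) * (n * supnorm (trailing_frame b *\<^sub>v y')))"
    using supnorm_nonneg[OF W(1)] by (intro sum_mono mult_mono) auto
  then show ?thesis by simp
qed

lemma prod_leading_eigs_pos:
  assumes "b \<le> n" "0 < Delta_norm n c b x0"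
  shows "0 < (\<Prod>i<b. \<bar>ls ! i\<bar>)"
proof -
  have "0 < fact b * real (card (index_maps b n))^2 * (\<Prod>i<b. \<bar>ls ! i\<bar>)"
    using Delta_norm_le[OF assms(1)] assms(2) by linarith
  moreover have "0 \<le> (\<Prod>i<b. \<bar>ls ! i\<bar>)" by (simp add: prod_nonneg)
  ultimately show ?thesis by (simp add: zero_less_mult_iff)
qed

lemma divide_prod_leading_eigs_le:
  assumes "b \<le> n" "0 < Delta_norm n c b x0" "0 \<le> R"
  shows "R / (\<Prod>i<b. \<bar>ls ! i\<bar>) \<le> fact b * real (card (index_maps b n))^2 * R / Delta_norm n c b x0"
proof -
  define K where "K = fact b * real (card (index_maps b n))^2"
  have "0 < K * (\<Prod>i<b. \<bar>ls ! i\<bar>)"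
    using Delta_norm_le[OF assms(1)] assms(2) unfolding K_def by linarith
  then have "0 < K" using prod_leading_eigs_pos[OF assms(1,2)] by (simp add: zero_less_mult_iff)
  then have "R / (\<Prod>i<b. \<bar>ls ! i\<bar>) = K * R / (K * (\<Prod>i<b. \<bar>ls ! i\<bar>))" by simp
  also have "\<dots> \<le> K * R / Delta_norm n c b x0"
    using Delta_norm_le[OF assms(1)] assms \<open>0 < K\<close> unfolding K_def by (intro divide_left_mono) auto
  finally show ?thesis unfolding K_def .
qed

lemma trailing_bilinear_bound:
  assumes b: "1 \<le> b" "b < n" and P: "0 < (\<Prod>i<b. \<bar>ls ! i\<bar>)"
    and y: "y \<in> carrier_vec (n - b)" and y': "y' \<in> carrier_vec (n - b)" and t: "t \<in> carrier_vec n"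
  defines "Y \<equiv> trailing_frame b *\<^sub>v y" and "Y' \<equiv> trailing_frame b *\<^sub>v y'"
  shows "(\<Prod>i<b. \<bar>ls ! i\<bar>) * \<bar>\<Sum>a<n. \<Sum>d<n. Y $ a * hess n c t $$ (a,d) * Y' $ d\<bar> \<le>
    real (card (index_maps (b + 1) n))^2 * supnorm Y * supnorm Y' * Jac_norm n c (b + 1) x0 t +
    \<bar>ls ! b\<bar> * (n * ((n * supnorm Y) * (n * supnorm Y'))) * (b * (n * n * (6 * n * supnorm t)))
      * ((\<Prod>i<b. \<bar>ls ! i\<bar>) / \<bar>ls ! (b - 1)\<bar>)"
proof -
  define z where "z l = (if b \<le> l then y $ (l - b) else 0)" for l
  define z' where "z' l = (if b \<le> l then y' $ (l - b) else 0)" for l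
  have n: "0 < n" using b by simp
  have Yc: "Y \<in> carrier_vec n" "Y' \<in> carrier_vec n"
    unfolding Y_def Y'_def using trailing_frame_carrier y y' by (auto intro: mult_mat_vec_carrier)
  have Yz: "Y $ a = (\<Sum>l<n. Q $$ (a,l) * z l)" "Y' $ a = (\<Sum>l<n. Q $$ (a,l) * z' l)" if "a < n" for a
    unfolding Y_def Y'_def z_def z'_def using trailing_frame_mult_vec y y' that b by auto
  have "(\<Prod>i<b. \<bar>ls ! i\<bar>) * \<bar>\<Sum>a<n. \<Sum>d<n. Y $ a * hess n c t $$ (a,d) * Y' $ d\<bar> \<le>
      real (card (index_maps (Suc b) n))^2 * supnorm Y * supnorm Y' * Jac_norm n c (Suc b) x0 t +
      \<bar>ls ! b\<bar> * (\<Sum>l<n. \<bar>z l\<bar> * \<bar>z' l\<bar>) * (b * (n * n * (6 * n * supnorm t)))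
        * ((\<Prod>i<b. \<bar>ls ! i\<bar>) / \<bar>ls ! (b - 1)\<bar>)"
    by (rule bordered_quadratic_bound[OF b, where Y="\<lambda>a. Y $ a" and Y'="\<lambda>a. Y' $ a",
          OF Yz(1) _ Yz(2) _ abs_hess_index_le[OF nonzero t] abs_det_derivative_le_Jac_norm[OF t]
          abs_index_le_supnorm[OF Yc(1)] abs_index_le_supnorm[OF Yc(2)] P])
      (simp_all add: z_def z'_def)
  also have "\<dots> \<le> real (card (index_maps (Suc b) n))^2 * supnorm Y * supnorm Y' * Jac_norm n c (Suc b) x0 t +
      \<bar>ls ! b\<bar> * (n * ((n * supnorm Y) * (n * supnorm Y'))) * (b * (n * n * (6 * n * supnorm t)))
        * ((\<Prod>i<b. \<bar>ls ! i\<bar>) / \<bar>ls ! (b - 1)\<bar>)"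
    using sum_trailing_coordinates_le[OF y y'] P supnorm_nonneg[OF t n]
    unfolding z_def z'_def Y_def Y'_def
    by (intro add_left_mono mult_right_mono mult_left_mono) (auto intro!: divide_nonneg_nonneg)
  finally show ?thesis by simp
qed

lemma hess_trailing_bound:
  assumes b: "1 \<le> b" "b < n" and Delta: "0 < Delta_norm n c b x0"
    and y: "y \<in> carrier_vec (n - b)" and y': "y' \<in> carrier_vec (n - b)" and t: "t \<in> carrier_vec n"
  shows "\<bar>(trailing_frame b *\<^sub>v y) \<bullet> (hess n c t *\<^sub>v (trailing_frame b *\<^sub>v y'))\<bar> \<le>
    (fact b * real (card (index_maps b n))^2 * real (card (index_maps (b + 1) n))^2 *
       (Jac_norm n c (b + 1) x0 t / Delta_norm n c b x0)
     + 6 * real b * real n ^ 6 * (\<bar>ls ! b\<bar> * supnorm t / \<bar>ls ! (b - 1)\<bar>))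
    * supnorm (trailing_frame b *\<^sub>v y) * supnorm (trailing_frame b *\<^sub>v y')"
proof -
  define Y where "Y = trailing_frame b *\<^sub>v y"
  define Y' where "Y' = trailing_frame b *\<^sub>v y'"
  define yy where "yy = supnorm Y"
  define yy' where "yy' = supnorm Y'"
  define P where "P = (\<Prod>i<b. \<bar>ls ! i\<bar>)"
  define K where "K = fact b * real (card (index_maps b n))^2"
  define C where "C = real (card (index_maps (b + 1) n))^2"
  define \<Delta> where "\<Delta> = Delta_norm n c b x0"
  define Jc where "Jc = Jac_norm n c (b + 1) x0 t"
  define L where "L = \<bar>ls ! (b - 1)\<bar>"
  have n: "0 < n" using b by simp
  have Yc: "Y \<in> carrier_vec n" "Y' \<in> carrier_vec n"
    unfolding Y_def Y'_def using trailing_frame_carrier y y' by (auto intro: mult_mat_vec_carrier)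
  have nonneg: "0 \<le> yy" "0 \<le> yy'" "0 \<le> Jc"
    unfolding yy_def yy'_def Jc_def
    using supnorm_nonneg[OF Yc(1) n] supnorm_nonneg[OF Yc(2) n]
      order.trans[OF abs_ge_zero abs_det_derivative_le_Jac_norm[OF t lessThan_in_minor_idx]] b
    by auto
  have P: "0 < P" unfolding P_def using prod_leading_eigs_pos b Delta by simp
  have "C * yy * yy' * Jc / P \<le> K * (C * yy * yy' * Jc) / \<Delta>"
    unfolding P_def K_def \<Delta>_def using nonneg b Delta by (intro divide_prod_leading_eigs_le) (auto simp: C_def)
  then have first: "C * yy * yy' * Jc / P \<le> K * C * (Jc / \<Delta>) * yy * yy'" by (simp add: mult_ac)
  have "L > 0" unfolding L_def using eig_last_pos[OF P[unfolded P_def] b(1)] .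
  have "P * \<bar>\<Sum>a<n. \<Sum>d<n. Y $ a * hess n c t $$ (a,d) * Y' $ d\<bar> \<le>
      C * yy * yy' * Jc + \<bar>ls ! b\<bar> * (n * ((n * yy) * (n * yy'))) * (b * (n * n * (6 * n * supnorm t))) * (P / L)"
    using trailing_bilinear_bound[OF b P[unfolded P_def] y y' t]
    unfolding P_def C_def L_def Jc_def yy_def yy'_def Y_def Y'_def .
  then have "\<bar>\<Sum>a<n. \<Sum>d<n. Y $ a * hess n c t $$ (a,d) * Y' $ d\<bar> \<le>
      C * yy * yy' * Jc / P + 6 * real b * real n ^ 6 * (\<bar>ls ! b\<bar> * supnorm t / L) * yy * yy'"
    using P \<open>L > 0\<close> by (simp add: field_simps eval_nat_numeral)
  also have "\<dots> \<le> (K * C * (Jc / \<Delta>) + 6 * real b * real n ^ 6 * (\<bar>ls ! b\<bar> * supnorm t / L)) * yy * yy'"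
    using first by (simp add: algebra_simps)
  also have "(\<Sum>a<n. \<Sum>d<n. Y $ a * hess n c t $$ (a,d) * Y' $ d) = Y \<bullet> (hess n c t *\<^sub>v Y')"
    using Yc by (simp add: hess_def scalar_prod_def lessThan_atLeast0 sum_distrib_left mult.assoc)
  finally show ?thesis
    unfolding Y_def Y'_def yy_def yy'_def K_def C_def Jc_def \<Delta>_def L_def .
qed

lemma hess_trailing_bound_const:
  assumes b: "1 \<le> b" "b < n" and Delta: "0 < Delta_norm n c b x0" and A: "hessian_bound_const n b \<le> A"
    and y: "y \<in> carrier_vec (n - b)" and y': "y' \<in> carrier_vec (n - b)" and t: "t \<in> carrier_vec n"
  shows "\<bar>(trailing_frame b *\<^sub>v y) \<bullet> (hess n c t *\<^sub>v (trailing_frame b *\<^sub>v y'))\<bar> \<le>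
    A * (Jac_norm n c (b + 1) x0 t / Delta_norm n c b x0 + \<bar>ls ! b\<bar> * supnorm t / \<bar>ls ! (b - 1)\<bar>)
    * supnorm (trailing_frame b *\<^sub>v y) * supnorm (trailing_frame b *\<^sub>v y')"
proof -
  have n: "0 < n" using b by simp
  have "0 \<le> Jac_norm n c (b + 1) x0 t / Delta_norm n c b x0"
    using Delta order.trans[OF abs_ge_zero abs_det_derivative_le_Jac_norm[OF t lessThan_in_minor_idx]] b
    by (intro divide_nonneg_pos) auto
  moreover have "0 \<le> \<bar>ls ! b\<bar> * supnorm t / \<bar>ls ! (b - 1)\<bar>" using supnorm_nonneg[OF t n] by simp
  ultimately have "fact b * real (card (index_maps b n))^2 * real (card (index_maps (b + 1) n))^2 *
       (Jac_norm n c (b + 1) x0 t / Delta_norm n c b x0)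
     + 6 * real b * real n ^ 6 * (\<bar>ls ! b\<bar> * supnorm t / \<bar>ls ! (b - 1)\<bar>) \<le>
    A * (Jac_norm n c (b + 1) x0 t / Delta_norm n c b x0 + \<bar>ls ! b\<bar> * supnorm t / \<bar>ls ! (b - 1)\<bar>)"
    using A unfolding hessian_bound_const_def by (intro add_mult_le_sum_mult) auto
  moreover have "0 \<le> supnorm (trailing_frame b *\<^sub>v y)" "0 \<le> supnorm (trailing_frame b *\<^sub>v y')"
    using supnorm_nonneg[OF _ n] trailing_frame_carrier y y' by (auto intro: mult_mat_vec_carrier)
  ultimately show ?thesis
    by (intro order.trans[OF hess_trailing_bound[OF b Delta y y' t]] mult_right_mono) auto
qed

end

lemma eig_list_props:
  assumes "symmetric_cubic_form n c S" "x0 \<in> carrier_vec n"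
  shows "length (eig_list n c x0) = n \<and> char_poly (hess n c x0) = (\<Prod>a\<leftarrow>eig_list n c x0. [:- a, 1:]) \<and>
    sorted_wrt (\<lambda>a b. \<bar>b\<bar> \<le> \<bar>a\<bar>) (eig_list n c x0)"
  unfolding eig_list_def
  by (rule someI_ex, rule char_poly_symmetric_sorted_factors)
    (use symmetric_cubic_form.hess_symmetric[OF assms(1)] assms(2) in \<open>auto simp: hess_def\<close>)

lemma cubic_eigenframe_exists:
  assumes cubic: "is_cubic_form n c" and nonzero: "\<exists>x \<in> carrier_vec n. c x \<noteq> 0" and x0: "x0 \<in> carrier_vec n"
  obtains S Q where "cubic_eigenframe n c S x0 Q (eig_list n c x0)"
proof -
  obtain S where "symmetric_cubic_form n c S" using symmetric_cubic_coefficients[OF cubic] .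
  then interpret symmetric_cubic_form n c S .
  note ls = eig_list_props[OF symmetric_cubic_form_axioms x0]
  have "hess n c x0 \<in> carrier_mat n n" unfolding hess_def by simp
  then obtain Q where "Q \<in> carrier_mat n n" "sorted_eigenframe n (\<lambda>a d. hess n c x0 $$ (a,d)) Q (eig_list n c x0)"
    using sorted_eigenframe_exists[OF _ hess_symmetric[OF x0]] ls by blast
  then show ?thesis
    using that[of S Q] symmetric_cubic_form_axioms x0 nonzero
    by (simp add: cubic_eigenframe_def cubic_eigenframe_axioms_def)
qed

lemma hessian_bound_on_trailing_eigenspace:
  assumes cubic: "is_cubic_form n c" and nonzero: "\<exists>x \<in> carrier_vec n. c x \<noteq> 0"
    and b: "1 \<le> b" "b \<le> n - 1" and x0: "x0 \<in> carrier_vec n"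
    and minor: "\<exists>(I,J) \<in> minor_idx n b. Delta n c I J x0 \<noteq> 0"
    and A: "hessian_bound_const n b \<le> A"
  shows "\<exists>M \<in> carrier_mat n (n - b).
       (\<forall>y \<in> carrier_vec (n - b). M *\<^sub>v y = 0\<^sub>v n \<longrightarrow> y = 0\<^sub>v (n - b)) \<and>
       (\<forall>y \<in> carrier_vec (n - b). \<forall>y' \<in> carrier_vec (n - b). \<forall>t \<in> carrier_vec n.
          let Y = M *\<^sub>v y; Y' = M *\<^sub>v y' in
          \<bar>Y \<bullet> (hess n c t *\<^sub>v Y')\<bar> \<le>
            A * (Jac_norm n c (b + 1) x0 t / Delta_norm n c b x0
                 + \<bar>eig n c x0 (b + 1)\<bar> * supnorm t / \<bar>eig n c x0 b\<bar>)
              * supnorm Y * supnorm Y')"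
proof -
  obtain S Q where "cubic_eigenframe n c S x0 Q (eig_list n c x0)"
    using cubic_eigenframe_exists[OF cubic nonzero x0] by blast
  then interpret cubic_eigenframe n c S x0 Q "eig_list n c x0" .
  have Delta: "0 < Delta_norm n c b x0"
    using minor Max_minor_idx_ge[of _ _ n b "\<lambda>I J. \<bar>Delta n c I J x0\<bar>"] unfolding Delta_norm_def
    by (force intro: order.strict_trans2)
  show ?thesis
  proof (intro bexI[OF _ trailing_frame_carrier] conjI ballI impI, unfold Let_def)
    show "y = 0\<^sub>v (n - b)" if "y \<in> carrier_vec (n - b)" "trailing_frame b *\<^sub>v y = 0\<^sub>v n" for y
      using trailing_frame_inj that .
    show "\<bar>(trailing_frame b *\<^sub>v y) \<bullet> (hess n c t *\<^sub>v (trailing_frame b *\<^sub>v y'))\<bar> \<le>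
      A * (Jac_norm n c (b + 1) x0 t / Delta_norm n c b x0
        + \<bar>eig n c x0 (b + 1)\<bar> * supnorm t / \<bar>eig n c x0 b\<bar>)
      * supnorm (trailing_frame b *\<^sub>v y) * supnorm (trailing_frame b *\<^sub>v y')"
      if "y \<in> carrier_vec (n - b)" "y' \<in> carrier_vec (n - b)" "t \<in> carrier_vec n" for y y' t
      using hess_trailing_bound_const[OF b(1) _ Delta A that] b unfolding eig_def by simp
  qed
qed

theorem lemma5p1:
  fixes n :: nat
  shows "\<exists>A :: real. \<forall>c b x0.
    is_cubic_form n c \<and> (\<exists>x \<in> carrier_vec n. c x \<noteq> 0) \<and>
    1 \<le> b \<and> b \<le> n - 1 \<and> x0 \<in> carrier_vec n \<and>
    (\<exists>(I,J) \<in> minor_idx n b. Delta n c I J x0 \<noteq> 0)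
    \<longrightarrow>
    (\<exists>M \<in> carrier_mat n (n - b).
       (\<forall>y \<in> carrier_vec (n - b). M *\<^sub>v y = 0\<^sub>v n \<longrightarrow> y = 0\<^sub>v (n - b)) \<and>
       (\<forall>y \<in> carrier_vec (n - b). \<forall>y' \<in> carrier_vec (n - b). \<forall>t \<in> carrier_vec n.
          let Y = M *\<^sub>v y; Y' = M *\<^sub>v y' in
          \<bar>Y \<bullet> (hess n c t *\<^sub>v Y')\<bar> \<le>
            A * (Jac_norm n c (b + 1) x0 t / Delta_norm n c b x0
                 + \<bar>eig n c x0 (b + 1)\<bar> * supnorm t / \<bar>eig n c x0 b\<bar>)
              * supnorm Y * supnorm Y'))"
  by (intro exI[of _ "\<Sum>b\<le>n. hessian_bound_const n b"] allI impI, elim conjE,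
      rule hessian_bound_on_trailing_eigenspace)
    (auto intro!: member_le_sum hessian_bound_const_nonneg)

end
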